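(* If $G$ is a Klee-graph with at least $10$ vertices that contains (at least) three triangles, then $G$ is the tricorn or a descendant of the tricorn.
   Context: For a cubic graph $G$ and $v\in V(G)$ with neighbours $x_1,x_2,x_3$, $G^v$ denotes the cubic graph obtained by replacing $v$ by a triangle: delete $v$, add new vertices $v_1,v_2,v_3$, the edges $v_1v_2,v_2v_3,v_3v_1$, and the edges $v_ix_i$ for $i=1,2,3$. A graph is a Klee-graph if it is $K_4$, or it equals $H^w$ for some Klee-graph $H$ and some $w\in V(H)$. A graph $H$ is a descendant of $G$ if $H$ can be obtained from $G$ by a (nonempty) sequence of such replacements of vertices by triangles. The tricorn is the 10-vertex graph obtained from $K_4$ by replacing three of its vertices by triangles. *)

theory Defs
  imports Main
begin

text \<open>A (finite simple) graph: a vertex set and a set of edges, each edge a 2-element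
  subset of the vertex set. Vertices are natural numbers (any finite graph is
  isomorphic to one of these).\<close>

type_synonym graph = "nat set \<times> nat set set"

definition verts :: "graph \<Rightarrow> nat set" where "verts G = fst G"
definition edges :: "graph \<Rightarrow> nat set set" where "edges G = snd G"

definition wf_graph :: "graph \<Rightarrow> bool" where
  "wf_graph G \<longleftrightarrow> finite (verts G) \<and>
     (\<forall>e\<in>edges G. e \<subseteq> verts G \<and> card e = 2)"

definition nbrs :: "graph \<Rightarrow> nat \<Rightarrow> nat set" where
  "nbrs G v = {u. {u, v} \<in> edges G}"

definition cubic :: "graph \<Rightarrow> bool" where
  "cubic G \<longleftrightarrow> wf_graph G \<and> (\<forall>v\<in>verts G. card (nbrs G v) = 3)"

definition graph_iso :: "graph \<Rightarrow> graph \<Rightarrow> bool" where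
  "graph_iso G H \<longleftrightarrow> (\<exists>f. bij_betw f (verts G) (verts H) \<and>
      edges H = (\<lambda>e. f ` e) ` edges G)"

definition is_K4 :: "graph \<Rightarrow> bool" where
  "is_K4 G \<longleftrightarrow> card (verts G) = 4 \<and> finite (verts G) \<and>
     edges G = {e. e \<subseteq> verts G \<and> card e = 2}"

text \<open>replace_by_triangle G v H: H is (a copy of) G^v, i.e. v (with neighbours
  x1,x2,x3) is deleted and replaced by a triangle on fresh vertices v1,v2,v3 with v_i x_i.\<close>
definition replace_by_triangle :: "graph \<Rightarrow> nat \<Rightarrow> graph \<Rightarrow> bool" where
  "replace_by_triangle G v H \<longleftrightarrow> cubic G \<and> v \<in> verts G \<and>
     (\<exists>x1 x2 x3 v1 v2 v3.
        nbrs G v = {x1, x2, x3} \<and> distinct [x1, x2, x3] \<and>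
        distinct [v1, v2, v3] \<and> v1 \<notin> verts G \<and> v2 \<notin> verts G \<and> v3 \<notin> verts G \<and>
        verts H = (verts G - {v}) \<union> {v1, v2, v3} \<and>
        edges H = {e \<in> edges G. v \<notin> e} \<union>
          {{v1, v2}, {v2, v3}, {v3, v1}, {v1, x1}, {v2, x2}, {v3, x3}})"

inductive klee :: "graph \<Rightarrow> bool" where
  K4: "is_K4 G \<Longrightarrow> klee G"
| step: "klee H \<Longrightarrow> w \<in> verts H \<Longrightarrow> replace_by_triangle H w G \<Longrightarrow> klee G"
| iso: "klee H \<Longrightarrow> graph_iso H G \<Longrightarrow> klee G"

inductive descendant :: "graph \<Rightarrow> graph \<Rightarrow> bool" where
  one: "v \<in> verts G \<Longrightarrow> replace_by_triangle G v H \<Longrightarrow> descendant G H"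
| more: "descendant G H \<Longrightarrow> v \<in> verts H \<Longrightarrow> replace_by_triangle H v H' \<Longrightarrow> descendant G H'"

definition is_tricorn :: "graph \<Rightarrow> bool" where
  "is_tricorn T \<longleftrightarrow> (\<exists>K K1 K2 a b c. is_K4 K \<and> a \<in> verts K \<and> b \<in> verts K \<and> c \<in> verts K \<and>
      distinct [a, b, c] \<and> replace_by_triangle K a K1 \<and> replace_by_triangle K1 b K2 \<and>
      replace_by_triangle K2 c T)"

definition triangles :: "graph \<Rightarrow> nat set set" where
  "triangles G = {T. T \<subseteq> verts G \<and> card T = 3 \<and>
      (\<forall>x\<in>T. \<forall>y\<in>T. x \<noteq> y \<longrightarrow> {x, y} \<in> edges G)}"

end

theory Submission
  imports Defs
begin

text \<open>
  Call a Klee-graph a ladder if it arises from \<open>K4\<close> by replacing only vertices that lie on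
  triangles; a ladder other than \<open>K4\<close> has exactly two triangles, and they are disjoint.
  Replacements at distinct vertices commute up to isomorphism, and the tricorn family (graphs
  isomorphic to the tricorn or to one of its descendants) is closed under replacements. So it
  suffices to show that replacing a vertex \<open>w\<close> on no triangle of a ladder \<open>C\<close> lands in the
  tricorn family: then every Klee-graph is a ladder or in the family, and a graph with ten
  vertices and three triangles is not a ladder.

  Write \<open>C \<cong> E\<^sup>t\<close> for a smaller ladder \<open>E\<close>, so that \<open>C\<^sup>w \<cong> (E\<^sup>w)\<^sup>t\<close>. If \<open>w\<close> lies on no
  triangle of \<open>E\<close>, induct on \<open>E\<close>. Otherwise \<open>w\<close> lies on a triangle of \<open>E\<close> through \<open>t\<close>;
  undoing the step that created the other triangle of \<open>E\<close> gives \<open>E \<cong> F\<^sup>a\<close> and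
  \<open>C\<^sup>w \<cong> ((F\<^sup>a)\<^sup>t)\<^sup>w\<close>. This is the tricorn if \<open>F = K4\<close>; otherwise it is isomorphic to
  \<open>((F\<^sup>t)\<^sup>w)\<^sup>a\<close>, where \<open>w\<close> lies on no triangle of the ladder \<open>F\<^sup>t\<close>, which is smaller than \<open>C\<close>.
\<close>

section \<open>Adjacency and isomorphisms\<close>

definition adj :: "graph \<Rightarrow> nat \<Rightarrow> nat \<Rightarrow> bool" where
  "adj G a b \<longleftrightarrow> {a, b} \<in> edges G"

lemma adj_sym: "adj G a b \<longleftrightarrow> adj G b a"
  by (simp add: adj_def insert_commute)

lemma nbrs_adj: "nbrs G v = {u. adj G u v}"
  by (simp add: nbrs_def adj_def)

lemma wf_graph_adjD:
  assumes "wf_graph G" "adj G a b"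
  shows "a \<in> verts G \<and> b \<in> verts G \<and> a \<noteq> b"
proof -
  have "{a, b} \<subseteq> verts G" "card {a, b} = 2"
    using assms unfolding wf_graph_def adj_def by auto
  then show ?thesis by (cases "a = b") auto
qed

lemma wf_graph_edgeE:
  assumes "wf_graph G" "e \<in> edges G"
  obtains a b where "e = {a, b}" "adj G a b"
  using assms unfolding wf_graph_def adj_def by (metis card_2_iff)

lemma wf_graph_nbrs_subset: "wf_graph G \<Longrightarrow> nbrs G v \<subseteq> verts G"
  unfolding nbrs_adj using wf_graph_adjD by blast

lemma cubic_wf_graph: "cubic G \<Longrightarrow> wf_graph G"
  by (simp add: cubic_def)

lemma verts_pair [simp]: "verts (V, E) = V"
  by (simp add: verts_def)

lemma edges_pair [simp]: "edges (V, E) = E"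
  by (simp add: edges_def)

text \<open>Equivalent to \<open>graph_iso\<close> on well-formed graphs, but phrased through adjacency of the
  vertex map, which is what the proofs manipulate.\<close>

definition is_iso :: "(nat \<Rightarrow> nat) \<Rightarrow> graph \<Rightarrow> graph \<Rightarrow> bool" where
  "is_iso f A B \<longleftrightarrow> bij_betw f (verts A) (verts B) \<and>
     (\<forall>a\<in>verts A. \<forall>b\<in>verts A. adj B (f a) (f b) \<longleftrightarrow> adj A a b)"

lemma is_iso_bij: "is_iso f A B \<Longrightarrow> bij_betw f (verts A) (verts B)"
  by (simp add: is_iso_def)

lemma is_iso_adj: "is_iso f A B \<Longrightarrow> a \<in> verts A \<Longrightarrow> b \<in> verts A \<Longrightarrow> adj B (f a) (f b) \<longleftrightarrow> adj A a b"
  by (simp add: is_iso_def)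

lemma is_iso_in: "is_iso f A B \<Longrightarrow> a \<in> verts A \<Longrightarrow> f a \<in> verts B"
  unfolding is_iso_def using bij_betw_apply by metis

lemma is_iso_inj_on: "is_iso f A B \<Longrightarrow> inj_on f (verts A)"
  unfolding is_iso_def using bij_betw_imp_inj_on by blast

lemma is_iso_eq_iff: "is_iso f A B \<Longrightarrow> a \<in> verts A \<Longrightarrow> b \<in> verts A \<Longrightarrow> f a = f b \<longleftrightarrow> a = b"
  using is_iso_inj_on inj_on_eq_iff by metis

lemma is_iso_surj: "is_iso f A B \<Longrightarrow> y \<in> verts B \<Longrightarrow> \<exists>x\<in>verts A. f x = y"
  unfolding is_iso_def using bij_betw_imp_surj_on by (metis imageE)

lemma is_iso_card: "is_iso f A B \<Longrightarrow> card (verts B) = card (verts A)"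
  unfolding is_iso_def using bij_betw_same_card by metis

lemma is_iso_id: "is_iso id A A"
  by (simp add: is_iso_def)

lemma is_iso_comp:
  assumes f: "is_iso f A B" and g: "is_iso g B C"
  shows "is_iso (g \<circ> f) A C"
  unfolding is_iso_def
proof (intro conjI ballI)
  show "bij_betw (g \<circ> f) (verts A) (verts C)" using f g is_iso_bij bij_betw_trans by blast
  fix a b assume "a \<in> verts A" "b \<in> verts A"
  then show "adj C ((g \<circ> f) a) ((g \<circ> f) b) \<longleftrightarrow> adj A a b"
    using is_iso_adj[OF f] is_iso_adj[OF g] is_iso_in[OF f] by simp
qed

lemma is_iso_edges:
  assumes "wf_graph A" "wf_graph B" "is_iso f A B"
  shows "edges B = (\<lambda>e. f ` e) ` edges A"
proof (intro equalityI subsetI)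
  fix e assume "e \<in> edges B"
  then obtain p q where pq: "e = {p, q}" "adj B p q" by (rule wf_graph_edgeE[OF assms(2)])
  then have "p \<in> verts B" "q \<in> verts B" using wf_graph_adjD[OF assms(2)] by blast+
  then obtain a b where ab: "a \<in> verts A" "b \<in> verts A" "f a = p" "f b = q"
    using is_iso_surj[OF assms(3)] by metis
  then have "{a, b} \<in> edges A" using pq(2) is_iso_adj[OF assms(3) ab(1,2)] by (simp add: adj_def)
  moreover have "e = f ` {a, b}" using ab pq(1) by simp
  ultimately show "e \<in> (\<lambda>e. f ` e) ` edges A" by blast
next
  fix e assume "e \<in> (\<lambda>e. f ` e) ` edges A"
  then obtain e0 where e0: "e0 \<in> edges A" "e = f ` e0" by blast
  obtain a b where ab: "e0 = {a, b}" "adj A a b" by (rule wf_graph_edgeE[OF assms(1) e0(1)])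
  then have "a \<in> verts A" "b \<in> verts A" using wf_graph_adjD[OF assms(1)] by blast+
  then have "adj B (f a) (f b)" using ab(2) is_iso_adj[OF assms(3)] by blast
  then show "e \<in> edges B" using e0(2) ab(1) by (simp add: adj_def)
qed

lemma is_iso_imp_graph_iso:
  assumes "wf_graph A" "wf_graph B" "is_iso f A B"
  shows "graph_iso A B"
  unfolding graph_iso_def by (intro exI[of _ f] conjI is_iso_bij[OF assms(3)] is_iso_edges[OF assms])

lemma graph_iso_wf_graph:
  assumes "wf_graph A" "bij_betw f (verts A) (verts B)" "edges B = (\<lambda>e. f ` e) ` edges A"
  shows "wf_graph B"
proof -
  have inj: "inj_on f (verts A)" and im: "f ` verts A = verts B"
    using assms(2) bij_betw_imp_inj_on bij_betw_imp_surj_on by blast+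
  have "e \<subseteq> verts B \<and> card e = 2" if e: "e \<in> edges B" for e
  proof -
    obtain e0 where e0: "e0 \<in> edges A" "e = f ` e0" using e assms(3) by blast
    then have "e0 \<subseteq> verts A" "card e0 = 2" using assms(1) unfolding wf_graph_def by simp_all
    moreover have "inj_on f e0" using inj inj_on_subset \<open>e0 \<subseteq> verts A\<close> by blast
    ultimately show ?thesis using e0(2) im by (auto simp: card_image)
  qed
  then show ?thesis using assms(1,2) bij_betw_finite unfolding wf_graph_def by blast
qed

lemma graph_iso_imp_is_iso:
  assumes "wf_graph A" "bij_betw f (verts A) (verts B)" "edges B = (\<lambda>e. f ` e) ` edges A"
  shows "is_iso f A B"
  unfolding is_iso_def
proof (intro conjI ballI assms(2))
  fix a b assume ab: "a \<in> verts A" "b \<in> verts A"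
  have inj: "inj_on f (verts A)" using assms(2) bij_betw_imp_inj_on by blast
  show "adj B (f a) (f b) \<longleftrightarrow> adj A a b"
  proof
    assume "adj B (f a) (f b)"
    then have "{f a, f b} \<in> (\<lambda>e. f ` e) ` edges A" using assms(3) adj_def by metis
    then obtain e where e: "e \<in> edges A" "f ` e = {f a, f b}" by (metis imageE)
    obtain c d where cd: "e = {c, d}" "adj A c d" by (rule wf_graph_edgeE[OF assms(1) e(1)])
    then have "c \<in> verts A" "d \<in> verts A" using wf_graph_adjD[OF assms(1)] by blast+
    have "{f c, f d} = {f a, f b}" using e cd by simp
    then have "(f c = f a \<and> f d = f b) \<or> (f c = f b \<and> f d = f a)" by (simp add: doubleton_eq_iff)
    then have "(c = a \<and> d = b) \<or> (c = b \<and> d = a)"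
      using inj ab \<open>c \<in> verts A\<close> \<open>d \<in> verts A\<close> by (meson inj_onD)
    then have "e = {a, b}" using cd by auto
    then show "adj A a b" using e adj_def by simp
  next
    assume "adj A a b"
    then have "{a, b} \<in> edges A" by (simp add: adj_def)
    then have "f ` {a, b} \<in> edges B" using assms(3) by blast
    then show "adj B (f a) (f b)" by (simp add: adj_def)
  qed
qed

lemma is_iso_nbrs:
  assumes "wf_graph A" "wf_graph B" "is_iso f A B" "a \<in> verts A"
  shows "nbrs B (f a) = f ` nbrs A a"
proof (intro equalityI subsetI)
  fix y assume "y \<in> nbrs B (f a)"
  then have y: "adj B y (f a)" by (simp add: nbrs_adj)
  then obtain x where x: "x \<in> verts A" "f x = y"
    using wf_graph_adjD[OF assms(2)] is_iso_surj[OF assms(3)] by blast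
  then show "y \<in> f ` nbrs A a" using is_iso_adj[OF assms(3) x(1) assms(4)] y by (auto simp: nbrs_adj)
next
  fix y assume "y \<in> f ` nbrs A a"
  then obtain x where x: "adj A x a" "y = f x" by (auto simp: nbrs_adj)
  then show "y \<in> nbrs B (f a)"
    using wf_graph_adjD[OF assms(1)] is_iso_adj[OF assms(3) _ assms(4)] by (auto simp: nbrs_adj)
qed

lemma is_iso_cubic:
  assumes "cubic A" "wf_graph B" "is_iso f A B"
  shows "cubic B"
proof -
  have "card (nbrs B y) = 3" if y: "y \<in> verts B" for y
  proof -
    obtain x where x: "x \<in> verts A" "f x = y" using is_iso_surj[OF assms(3) y] by blast
    have "inj_on f (nbrs A x)"
      using is_iso_inj_on[OF assms(3)] wf_graph_nbrs_subset[OF cubic_wf_graph[OF assms(1)]]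
      by (rule inj_on_subset)
    then have "card (nbrs B y) = card (nbrs A x)"
      using is_iso_nbrs[OF cubic_wf_graph[OF assms(1)] assms(2,3) x(1)] x(2) by (simp add: card_image)
    then show ?thesis using assms(1) x(1) unfolding cubic_def by simp
  qed
  then show ?thesis using assms(2) unfolding cubic_def by simp
qed

lemma graph_iso_cubic:
  assumes "cubic A" "graph_iso A B"
  shows "cubic B \<and> (\<exists>f. is_iso f A B)"
proof -
  obtain f where f: "bij_betw f (verts A) (verts B)" "edges B = (\<lambda>e. f ` e) ` edges A"
    using assms(2) unfolding graph_iso_def by blast
  have "is_iso f A B" using graph_iso_imp_is_iso[OF cubic_wf_graph[OF assms(1)] f] .
  then show ?thesis
    using is_iso_cubic[OF assms(1) graph_iso_wf_graph[OF cubic_wf_graph[OF assms(1)] f]] by blast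
qed

section \<open>Triangles\<close>

definition is_triangle :: "graph \<Rightarrow> nat \<Rightarrow> nat \<Rightarrow> nat \<Rightarrow> bool" where
  "is_triangle G a b c \<longleftrightarrow> a \<noteq> b \<and> a \<noteq> c \<and> b \<noteq> c \<and> adj G a b \<and> adj G a c \<and> adj G b c"

lemma is_triangle_perm: "is_triangle G a b c \<Longrightarrow> is_triangle G b a c" "is_triangle G a b c \<Longrightarrow> is_triangle G c b a"
  unfolding is_triangle_def using adj_sym[of G] by metis+

lemma is_triangle_verts: "wf_graph G \<Longrightarrow> is_triangle G a b c \<Longrightarrow> a \<in> verts G \<and> b \<in> verts G \<and> c \<in> verts G"
  unfolding is_triangle_def using wf_graph_adjD by blast

lemma triangles_iff:
  assumes "wf_graph G"
  shows "T \<in> triangles G \<longleftrightarrow> (\<exists>a b c. T = {a, b, c} \<and> is_triangle G a b c)"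
proof
  assume "T \<in> triangles G"
  then have T: "card T = 3" "\<forall>x\<in>T. \<forall>y\<in>T. x \<noteq> y \<longrightarrow> {x, y} \<in> edges G"
    unfolding triangles_def by simp_all
  then obtain a b c where "T = {a, b, c}" "a \<noteq> b" "b \<noteq> c" "a \<noteq> c" using card_3_iff by metis
  then show "\<exists>a b c. T = {a, b, c} \<and> is_triangle G a b c"
    using T(2) unfolding is_triangle_def adj_def by auto
next
  assume "\<exists>a b c. T = {a, b, c} \<and> is_triangle G a b c"
  then obtain a b c where abc: "T = {a, b, c}" "is_triangle G a b c" by blast
  then have "a \<noteq> b" "a \<noteq> c" "b \<noteq> c" and ad: "adj G a b" "adj G a c" "adj G b c"
    unfolding is_triangle_def by simp_all
  moreover have "T \<subseteq> verts G" using is_triangle_verts[OF assms abc(2)] abc(1) by simp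
  moreover have "\<forall>x\<in>T. \<forall>y\<in>T. x \<noteq> y \<longrightarrow> {x, y} \<in> edges G"
    using ad adj_sym[of G] unfolding abc adj_def by auto
  ultimately show "T \<in> triangles G" unfolding triangles_def abc by simp
qed

lemma is_triangle_in_triangles: "wf_graph G \<Longrightarrow> is_triangle G a b c \<Longrightarrow> {a, b, c} \<in> triangles G"
  by (subst triangles_iff) blast+

lemma trianglesE:
  assumes "wf_graph G" "T \<in> triangles G"
  obtains a b c where "T = {a, b, c}" "is_triangle G a b c"
  using triangles_iff[OF assms(1), of T] assms(2) by blast

lemma triangles_subset_verts: "T \<in> triangles G \<Longrightarrow> T \<subseteq> verts G"
  unfolding triangles_def by simp

lemma card_triangle: "T \<in> triangles G \<Longrightarrow> card T = 3"
  unfolding triangles_def by simp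

lemma is_iso_is_triangle:
  assumes "is_iso f A B" "a \<in> verts A" "b \<in> verts A" "c \<in> verts A"
  shows "is_triangle B (f a) (f b) (f c) \<longleftrightarrow> is_triangle A a b c"
  unfolding is_triangle_def using is_iso_eq_iff[OF assms(1)] is_iso_adj[OF assms(1)] assms(2-4) by simp

lemma is_iso_triangles:
  assumes "wf_graph A" "wf_graph B" "is_iso f A B"
  shows "triangles B = (\<lambda>T. f ` T) ` triangles A"
proof (intro equalityI subsetI)
  fix T assume "T \<in> triangles B"
  then obtain a b c where T: "T = {a, b, c}" "is_triangle B a b c" by (rule trianglesE[OF assms(2)])
  then have "a \<in> verts B" "b \<in> verts B" "c \<in> verts B" using is_triangle_verts[OF assms(2)] by simp_all
  then obtain a' b' c' where p: "a' \<in> verts A" "b' \<in> verts A" "c' \<in> verts A" "f a' = a" "f b' = b" "f c' = c"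
    using is_iso_surj[OF assms(3)] by metis
  then have "is_triangle A a' b' c'" using is_iso_is_triangle[OF assms(3) p(1-3)] T(2) by simp
  then have "{a', b', c'} \<in> triangles A" by (rule is_triangle_in_triangles[OF assms(1)])
  moreover have "T = f ` {a', b', c'}" using T(1) p by simp
  ultimately show "T \<in> (\<lambda>T. f ` T) ` triangles A" by blast
next
  fix T assume "T \<in> (\<lambda>T. f ` T) ` triangles A"
  then obtain T0 where T0: "T0 \<in> triangles A" "T = f ` T0" by blast
  obtain a b c where abc: "T0 = {a, b, c}" "is_triangle A a b c" by (rule trianglesE[OF assms(1) T0(1)])
  then have p: "a \<in> verts A" "b \<in> verts A" "c \<in> verts A" using is_triangle_verts[OF assms(1)] by simp_all
  then have "is_triangle B (f a) (f b) (f c)" using is_iso_is_triangle[OF assms(3) p] abc(2) by simp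
  then have "{f a, f b, f c} \<in> triangles B" by (rule is_triangle_in_triangles[OF assms(2)])
  then show "T \<in> triangles B" using T0(2) abc(1) by simp
qed

lemma is_iso_card_triangles:
  assumes "wf_graph A" "wf_graph B" "is_iso f A B"
  shows "card (triangles B) = card (triangles A)"
proof -
  have "inj_on (\<lambda>T. f ` T) (triangles A)"
  proof (rule inj_onI)
    fix S T assume S: "S \<in> triangles A" and T: "T \<in> triangles A" and eq: "f ` S = f ` T"
    have "S \<subseteq> verts A" "T \<subseteq> verts A" using triangles_subset_verts S T by blast+
    then show "S = T" using eq is_iso_inj_on[OF assms(3)] inj_on_image_eq_iff by metis
  qed
  then show ?thesis unfolding is_iso_triangles[OF assms] by (rule card_image)
qed

lemma is_iso_triangle_image:
  assumes "wf_graph A" "wf_graph B" "is_iso f A B" "S \<in> triangles B" "x \<in> verts A" "f x \<in> S"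
  shows "\<exists>S0\<in>triangles A. x \<in> S0 \<and> S = f ` S0"
proof -
  obtain S0 where S0: "S0 \<in> triangles A" "S = f ` S0" using is_iso_triangles[OF assms(1-3)] assms(4) by blast
  have "S0 \<subseteq> verts A" using S0(1) triangles_subset_verts by blast
  then have "x \<in> S0" using assms(5,6) S0(2) is_iso_eq_iff[OF assms(3)] by blast
  then show ?thesis using S0 by blast
qed

lemma is_iso_in_triangles:
  assumes "wf_graph A" "wf_graph B" "is_iso f A B" "x \<in> verts A"
  shows "f x \<in> \<Union>(triangles B) \<longleftrightarrow> x \<in> \<Union>(triangles A)"
proof
  assume "f x \<in> \<Union>(triangles B)"
  then obtain S where "S \<in> triangles B" "f x \<in> S" by blast
  then show "x \<in> \<Union>(triangles A)" using is_iso_triangle_image[OF assms(1-3) _ assms(4)] by blast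
next
  assume "x \<in> \<Union>(triangles A)"
  then obtain S where "S \<in> triangles A" "x \<in> S" by blast
  then show "f x \<in> \<Union>(triangles B)" using is_iso_triangles[OF assms(1-3)] by blast
qed

section \<open>Replacing a vertex by a triangle\<close>

lemma card_insert_Diff_swap:
  assumes "finite A" "a \<in> A" "b \<notin> A"
  shows "card (insert b (A - {a})) = card A"
proof -
  have "card A > 0" using assms(1,2) card_gt_0_iff by blast
  then show ?thesis using assms by simp
qed

locale triangle_replacement =
  fixes G :: graph and v :: nat and H :: graph and x1 x2 x3 v1 v2 v3 :: nat
  assumes cubic_G: "cubic G"
    and v_in_G: "v \<in> verts G"
    and nbrs_v: "nbrs G v = {x1, x2, x3}"
    and distinct_x: "distinct [x1, x2, x3]"
    and distinct_new: "distinct [v1, v2, v3]"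
    and new_notin_G: "v1 \<notin> verts G" "v2 \<notin> verts G" "v3 \<notin> verts G"
    and verts_H: "verts H = (verts G - {v}) \<union> {v1, v2, v3}"
    and edges_H: "edges H = {e \<in> edges G. v \<notin> e} \<union>
          {{v1, v2}, {v2, v3}, {v3, v1}, {v1, x1}, {v2, x2}, {v3, x3}}"

lemma replace_by_triangle_iff:
  "replace_by_triangle G v H \<longleftrightarrow> (\<exists>x1 x2 x3 v1 v2 v3. triangle_replacement G v H x1 x2 x3 v1 v2 v3)"
  unfolding replace_by_triangle_def triangle_replacement_def
  by (rule iffI; elim exE conjE; intro exI conjI; assumption)

lemma replace_by_triangleE:
  assumes "replace_by_triangle G v H"
  obtains x1 x2 x3 v1 v2 v3 where "triangle_replacement G v H x1 x2 x3 v1 v2 v3"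
  using assms replace_by_triangle_iff by blast

lemma triangle_replacement_swap12:
  "triangle_replacement G v H x1 x2 x3 v1 v2 v3 \<Longrightarrow> triangle_replacement G v H x2 x1 x3 v2 v1 v3"
  unfolding triangle_replacement_def by (auto simp: insert_commute)

lemma triangle_replacement_swap23:
  "triangle_replacement G v H x1 x2 x3 v1 v2 v3 \<Longrightarrow> triangle_replacement G v H x1 x3 x2 v1 v3 v2"
  unfolding triangle_replacement_def by (auto simp: insert_commute)

context triangle_replacement
begin

lemma replace_by_triangle: "replace_by_triangle G v H"
  using replace_by_triangle_iff triangle_replacement_axioms by blast

lemma wf_G: "wf_graph G"
  using cubic_G by (rule cubic_wf_graph)

lemma finite_G: "finite (verts G)"
  using wf_G by (simp add: wf_graph_def)

lemma adj_v: "adj G z v \<longleftrightarrow> z = x1 \<or> z = x2 \<or> z = x3"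
  using nbrs_v by (auto simp: nbrs_adj)

lemma x_in_G: "x1 \<in> verts G" "x2 \<in> verts G" "x3 \<in> verts G"
  and x_ne_v: "x1 \<noteq> v" "x2 \<noteq> v" "x3 \<noteq> v"
  using adj_v wf_graph_adjD[OF wf_G] by blast+

lemma x_ne_new:
  "x1 \<noteq> v1" "x1 \<noteq> v2" "x1 \<noteq> v3" "x2 \<noteq> v1" "x2 \<noteq> v2" "x2 \<noteq> v3" "x3 \<noteq> v1" "x3 \<noteq> v2" "x3 \<noteq> v3"
  using x_in_G new_notin_G by blast+

lemma x_ne: "x1 \<noteq> x2" "x1 \<noteq> x3" "x2 \<noteq> x3"
  and new_ne: "v1 \<noteq> v2" "v1 \<noteq> v3" "v2 \<noteq> v3"
  using distinct_x distinct_new by simp_all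

lemma v_notin_H: "v \<notin> verts H"
  using verts_H new_notin_G v_in_G by blast

lemma mem_verts_H: "y \<in> verts H \<longleftrightarrow> (y \<in> verts G \<and> y \<noteq> v) \<or> y = v1 \<or> y = v2 \<or> y = v3"
  unfolding verts_H by blast

lemma new_in_H: "v1 \<in> verts H" "v2 \<in> verts H" "v3 \<in> verts H"
  unfolding mem_verts_H by simp_all

lemma old_in_H: "y \<in> verts G \<Longrightarrow> y \<noteq> v \<Longrightarrow> y \<in> verts H"
  unfolding mem_verts_H by simp

lemma card_verts_H: "card (verts H) = card (verts G) + 2"
proof -
  have "card (verts G - {v} \<union> {v1, v2, v3}) = card (verts G - {v}) + card {v1, v2, v3}"
    using finite_G new_notin_G by (intro card_Un_disjoint) auto
  moreover have "Suc (card (verts G - {v})) = card (verts G)"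
    by (rule card_Suc_Diff1[OF finite_G v_in_G])
  ultimately show ?thesis using verts_H new_ne by simp
qed

lemma adj_H:
  "adj H a b \<longleftrightarrow> (adj G a b \<and> a \<noteq> v \<and> b \<noteq> v) \<or>
     (a = v1 \<and> b = v2) \<or> (a = v2 \<and> b = v1) \<or> (a = v2 \<and> b = v3) \<or> (a = v3 \<and> b = v2) \<or>
     (a = v3 \<and> b = v1) \<or> (a = v1 \<and> b = v3) \<or> (a = v1 \<and> b = x1) \<or> (a = x1 \<and> b = v1) \<or>
     (a = v2 \<and> b = x2) \<or> (a = x2 \<and> b = v2) \<or> (a = v3 \<and> b = x3) \<or> (a = x3 \<and> b = v3)"
proof -
  have "adj H a b \<longleftrightarrow> ({a, b} \<in> edges G \<and> v \<notin> {a, b}) \<or> {a, b} = {v1, v2} \<or> {a, b} = {v2, v3} \<or>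
      {a, b} = {v3, v1} \<or> {a, b} = {v1, x1} \<or> {a, b} = {v2, x2} \<or> {a, b} = {v3, x3}"
    unfolding adj_def edges_H by (simp only: Un_iff mem_Collect_eq insert_iff empty_iff) argo
  then show ?thesis
    unfolding adj_def doubleton_eq_iff insert_iff empty_iff by (simp add: eq_commute[of v] disj_assoc)
qed

lemma adj_new:
  "adj H z v1 \<longleftrightarrow> z = v2 \<or> z = v3 \<or> z = x1"
  "adj H z v2 \<longleftrightarrow> z = v1 \<or> z = v3 \<or> z = x2"
  "adj H z v3 \<longleftrightarrow> z = v1 \<or> z = v2 \<or> z = x3"
proof -
  have "\<not> adj G z v1" "\<not> adj G z v2" "\<not> adj G z v3"
    using new_notin_G wf_graph_adjD[OF wf_G] by blast+
  then show "adj H z v1 \<longleftrightarrow> z = v2 \<or> z = v3 \<or> z = x1" "adj H z v2 \<longleftrightarrow> z = v1 \<or> z = v3 \<or> z = x2"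
    "adj H z v3 \<longleftrightarrow> z = v1 \<or> z = v2 \<or> z = x3"
    unfolding adj_H using x_ne_new new_ne by auto
qed

lemma adj_new':
  "adj H v1 z \<longleftrightarrow> z = v2 \<or> z = v3 \<or> z = x1"
  "adj H v2 z \<longleftrightarrow> z = v1 \<or> z = v3 \<or> z = x2"
  "adj H v3 z \<longleftrightarrow> z = v1 \<or> z = v2 \<or> z = x3"
  using adj_new adj_sym[of H] by metis+

lemma adj_old:
  assumes "y \<in> verts G" "y \<noteq> v"
  shows "adj H z y \<longleftrightarrow> (adj G z y \<and> z \<noteq> v) \<or> (z = v1 \<and> y = x1) \<or> (z = v2 \<and> y = x2) \<or> (z = v3 \<and> y = x3)"
proof -
  have "y \<noteq> v1" "y \<noteq> v2" "y \<noteq> v3" using new_notin_G assms(1) by blast+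
  then show ?thesis unfolding adj_H using assms(2) by auto
qed

lemma adj_old_old:
  assumes "a \<in> verts G" "a \<noteq> v" "b \<in> verts G" "b \<noteq> v"
  shows "adj H a b \<longleftrightarrow> adj G a b"
proof -
  have "a \<noteq> v1" "a \<noteq> v2" "a \<noteq> v3" using assms(1) new_notin_G by blast+
  then show ?thesis using adj_old[OF assms(3,4), of a] assms(2) by simp
qed

lemma wf_H: "wf_graph H"
proof -
  have adj: "a \<in> verts H \<and> b \<in> verts H \<and> a \<noteq> b" if "adj H a b" for a b
    using that unfolding adj_H mem_verts_H
    using wf_graph_adjD[OF wf_G, of a b] x_in_G x_ne_v x_ne_new new_ne by auto
  have "e \<subseteq> verts H \<and> card e = 2" if e: "e \<in> edges H" for e
  proof -
    have "\<exists>a b. e = {a, b}"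
      using e wf_G unfolding edges_H wf_graph_def by (auto simp: card_2_iff) blast
    then obtain a b where ab: "e = {a, b}" by blast
    then have "adj H a b" using e by (simp add: adj_def)
    then show ?thesis using adj ab by auto
  qed
  then show ?thesis using finite_G verts_H unfolding wf_graph_def by simp
qed

lemma nbrs_new: "nbrs H v1 = {v2, v3, x1}" "nbrs H v2 = {v1, v3, x2}" "nbrs H v3 = {v1, v2, x3}"
  unfolding nbrs_adj adj_new by auto

lemma nbrs_attached:
  "nbrs H x1 = insert v1 (nbrs G x1 - {v})"
  "nbrs H x2 = insert v2 (nbrs G x2 - {v})"
  "nbrs H x3 = insert v3 (nbrs G x3 - {v})"
  unfolding nbrs_adj adj_old[OF x_in_G(1) x_ne_v(1)] adj_old[OF x_in_G(2) x_ne_v(2)]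
    adj_old[OF x_in_G(3) x_ne_v(3)]
  using x_ne new_ne by auto

lemma nbrs_far:
  assumes "y \<in> verts G" "y \<noteq> v" "y \<noteq> x1" "y \<noteq> x2" "y \<noteq> x3"
  shows "nbrs H y = nbrs G y"
proof -
  have "\<not> adj G v y" using adj_v[of y] adj_sym[of G] assms(3-5) by blast
  then show ?thesis unfolding nbrs_adj adj_old[OF assms(1,2)] using assms(3-5) by auto
qed

lemma cubic_H: "cubic H"
proof -
  have deg: "card (nbrs G y) = 3" if "y \<in> verts G" for y
    using cubic_G that unfolding cubic_def by blast
  have fin: "finite (nbrs G y)" for y
    using finite_subset[OF wf_graph_nbrs_subset[OF wf_G] finite_G] .
  have v_nbr: "v \<in> nbrs G x1" "v \<in> nbrs G x2" "v \<in> nbrs G x3"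
    using adj_v adj_sym[of G] by (auto simp: nbrs_adj)
  have new_nbr: "v1 \<notin> nbrs G y" "v2 \<notin> nbrs G y" "v3 \<notin> nbrs G y" for y
    using wf_graph_nbrs_subset[OF wf_G] new_notin_G by blast+
  have "card (nbrs H y) = 3" if y: "y \<in> verts H" for y
  proof -
    consider "y \<in> {v1, v2, v3}" | "y \<in> {x1, x2, x3}" | "y \<in> verts G" "y \<noteq> v" "y \<notin> {x1, x2, x3}"
      using y mem_verts_H by blast
    then show ?thesis
    proof cases
      case 1
      then show ?thesis
        by (elim insertE emptyE) (simp_all add: nbrs_new x_ne_new[symmetric] new_ne)
    next
      case 2
      then consider "y = x1" | "y = x2" | "y = x3" by blast
      then show ?thesis
        using nbrs_attached deg[OF x_in_G(1)] deg[OF x_in_G(2)] deg[OF x_in_G(3)]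
          card_insert_Diff_swap[OF fin v_nbr(1) new_nbr(1)] card_insert_Diff_swap[OF fin v_nbr(2) new_nbr(2)]
          card_insert_Diff_swap[OF fin v_nbr(3) new_nbr(3)]
        by cases simp_all
    next
      case 3
      then show ?thesis using nbrs_far deg by simp
    qed
  qed
  then show ?thesis using wf_H unfolding cubic_def by blast
qed

lemma triangle_meeting_new:
  assumes "is_triangle H a b c" "a \<in> {v1, v2, v3}"
  shows "b \<in> {v1, v2, v3} \<and> c \<in> {v1, v2, v3}"
proof -
  have t: "b \<noteq> c" "adj H a b" "adj H a c" "adj H b c" using assms(1) unfolding is_triangle_def by simp_all
  note ne = x_ne_new x_ne_new[symmetric] new_ne new_ne[symmetric]
    x_ne x_ne[symmetric]
  from assms(2) show ?thesis
  proof (elim insertE emptyE)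
    assume "a = v1"
    then have "b = v2 \<or> b = v3 \<or> b = x1" "c = v2 \<or> c = v3 \<or> c = x1" using t adj_new' by simp_all
    then show ?thesis using t(1,4) by (elim disjE) (simp_all add: adj_new adj_new' ne)
  next
    assume "a = v2"
    then have "b = v1 \<or> b = v3 \<or> b = x2" "c = v1 \<or> c = v3 \<or> c = x2" using t adj_new' by simp_all
    then show ?thesis using t(1,4) by (elim disjE) (simp_all add: adj_new adj_new' ne)
  next
    assume "a = v3"
    then have "b = v1 \<or> b = v2 \<or> b = x3" "c = v1 \<or> c = v2 \<or> c = x3" using t adj_new' by simp_all
    then show ?thesis using t(1,4) by (elim disjE) (simp_all add: adj_new adj_new' ne)
  qed
qed

lemma triangles_H: "triangles H = insert {v1, v2, v3} {T \<in> triangles G. v \<notin> T}"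
proof (intro equalityI subsetI)
  fix T assume "T \<in> triangles H"
  then obtain a b c where T: "T = {a, b, c}" "is_triangle H a b c" by (rule trianglesE[OF wf_H])
  show "T \<in> insert {v1, v2, v3} {T \<in> triangles G. v \<notin> T}"
  proof (cases "a \<in> {v1, v2, v3} \<or> b \<in> {v1, v2, v3} \<or> c \<in> {v1, v2, v3}")
    case True
    have "a \<in> {v1, v2, v3}" "b \<in> {v1, v2, v3}" "c \<in> {v1, v2, v3}"
      using True triangle_meeting_new[OF T(2)] triangle_meeting_new[OF is_triangle_perm(1)[OF T(2)]]
        triangle_meeting_new[OF is_triangle_perm(2)[OF T(2)]] by blast+
    then have "T \<subseteq> {v1, v2, v3}" using T(1) by simp
    moreover have "card T = 3" using T unfolding is_triangle_def by simp
    moreover have "card {v1, v2, v3} = 3" using new_ne by simp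
    ultimately have "T = {v1, v2, v3}" using card_subset_eq[of "{v1, v2, v3}" T] by simp
    then show ?thesis by simp
  next
    case False
    have "a \<in> verts H" "b \<in> verts H" "c \<in> verts H" using is_triangle_verts[OF wf_H T(2)] by simp_all
    then have old: "a \<in> verts G" "a \<noteq> v" "b \<in> verts G" "b \<noteq> v" "c \<in> verts G" "c \<noteq> v"
      using False mem_verts_H by simp_all
    then have "is_triangle G a b c" using T(2) adj_old_old unfolding is_triangle_def by simp
    then have "T \<in> triangles G" using T(1) is_triangle_in_triangles[OF wf_G] by simp
    then show ?thesis using old T(1) by simp
  qed
next
  fix T assume "T \<in> insert {v1, v2, v3} {T \<in> triangles G. v \<notin> T}"
  then consider "T = {v1, v2, v3}" | "T \<in> triangles G" "v \<notin> T" by blast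
  then show "T \<in> triangles H"
  proof cases
    case 1
    have "is_triangle H v1 v2 v3" unfolding is_triangle_def using adj_new new_ne by simp
    then show ?thesis using 1 is_triangle_in_triangles[OF wf_H] by simp
  next
    case 2
    obtain a b c where T: "T = {a, b, c}" "is_triangle G a b c" by (rule trianglesE[OF wf_G 2(1)])
    then have "a \<in> verts G" "a \<noteq> v" "b \<in> verts G" "b \<noteq> v" "c \<in> verts G" "c \<noteq> v"
      using is_triangle_verts[OF wf_G T(2)] 2(2) by auto
    then have "is_triangle H a b c" using T(2) adj_old_old unfolding is_triangle_def by simp
    then show ?thesis using T(1) is_triangle_in_triangles[OF wf_H] by simp
  qed
qed

end

lemma replace_by_triangle_cubic:
  assumes "replace_by_triangle G v H"
  shows "cubic G" "cubic H"
proof -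
  obtain x1 x2 x3 v1 v2 v3 where "triangle_replacement G v H x1 x2 x3 v1 v2 v3"
    by (rule replace_by_triangleE[OF assms])
  then show "cubic G" "cubic H" by (simp_all add: triangle_replacement.cubic_G triangle_replacement.cubic_H)
qed

lemma replace_by_triangle_verts:
  assumes "replace_by_triangle G v H"
  shows "v \<in> verts G" "v \<notin> verts H" "verts G - {v} \<subseteq> verts H"
proof -
  obtain x1 x2 x3 v1 v2 v3 where r: "triangle_replacement G v H x1 x2 x3 v1 v2 v3"
    by (rule replace_by_triangleE[OF assms])
  show "v \<in> verts G" "v \<notin> verts H"
    using triangle_replacement.v_in_G[OF r] triangle_replacement.v_notin_H[OF r] by simp_all
  show "verts G - {v} \<subseteq> verts H" using triangle_replacement.old_in_H[OF r] by blast
qed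

section \<open>The complete graph on four vertices\<close>

lemma is_K4_adj: "is_K4 G \<Longrightarrow> adj G a b \<longleftrightarrow> a \<in> verts G \<and> b \<in> verts G \<and> a \<noteq> b"
  unfolding is_K4_def adj_def by (cases "a = b") auto

lemma is_K4_wf_graph: "is_K4 G \<Longrightarrow> wf_graph G"
  unfolding is_K4_def wf_graph_def by auto

lemma is_K4_nbrs: "is_K4 G \<Longrightarrow> v \<in> verts G \<Longrightarrow> nbrs G v = verts G - {v}"
  unfolding nbrs_adj using is_K4_adj by blast

lemma is_K4_cubic: "is_K4 G \<Longrightarrow> cubic G"
  unfolding cubic_def using is_K4_wf_graph is_K4_nbrs by (simp add: is_K4_def)

lemma is_K4_triangles:
  assumes "is_K4 G" "t \<in> verts G"
  shows "verts G - {t} \<in> triangles G"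
proof -
  have "card (verts G - {t}) = 3" using assms unfolding is_K4_def by simp
  moreover have "{x, y} \<in> edges G" if "x \<in> verts G" "y \<in> verts G" "x \<noteq> y" for x y
    using that assms(1) unfolding is_K4_def by simp
  ultimately show ?thesis unfolding triangles_def by blast
qed

lemma is_K4_triangle_avoiding:
  assumes "is_K4 G" "T \<in> triangles G" "t \<in> verts G" "t \<notin> T"
  shows "T = verts G - {t}"
proof -
  have "T \<subseteq> verts G - {t}" "card T = 3" using assms(2,4) unfolding triangles_def by auto
  moreover have "card (verts G - {t}) = 3" "finite (verts G - {t})"
    using assms(1,3) unfolding is_K4_def by simp_all
  ultimately show ?thesis using card_subset_eq by metis
qed

lemma is_K4_vertex_in_triangle: "is_K4 G \<Longrightarrow> a \<in> verts G \<Longrightarrow> \<exists>T\<in>triangles G. a \<in> T"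
proof -
  assume K: "is_K4 G" and a: "a \<in> verts G"
  have "card (verts G - {a}) = 3" using K a unfolding is_K4_def by simp
  then have "verts G - {a} \<noteq> {}" by (metis card.empty zero_neq_numeral)
  then obtain t where "t \<in> verts G" "t \<noteq> a" by blast
  then have "verts G - {t} \<in> triangles G" "a \<in> verts G - {t}" using is_K4_triangles[OF K] a by simp_all
  then show ?thesis by (rule rev_bexI)
qed

lemma is_iso_is_K4:
  assumes "wf_graph B" "is_iso f A B" "is_K4 A"
  shows "is_K4 B"
proof -
  have ad: "adj B a b" if h: "a \<in> verts B" "b \<in> verts B" "a \<noteq> b" for a b
  proof -
    obtain a' b' where p: "a' \<in> verts A" "b' \<in> verts A" "f a' = a" "f b' = b"
      using is_iso_surj[OF assms(2)] h(1,2) by metis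
    then have "a' \<noteq> b'" using h(3) by blast
    then have "adj A a' b'" using is_K4_adj[OF assms(3)] p(1,2) by simp
    then show "adj B a b" using is_iso_adj[OF assms(2) p(1,2)] p(3,4) by simp
  qed
  have "edges B = {e. e \<subseteq> verts B \<and> card e = 2}"
  proof (intro equalityI subsetI)
    fix e assume "e \<in> edges B"
    then show "e \<in> {e. e \<subseteq> verts B \<and> card e = 2}" using assms(1) unfolding wf_graph_def by blast
  next
    fix e assume e: "e \<in> {e. e \<subseteq> verts B \<and> card e = 2}"
    then have "card e = 2" by simp
    then obtain a b where ab: "e = {a, b}" "a \<noteq> b" unfolding card_2_iff by blast
    then have "adj B a b" using e ad by simp
    then show "e \<in> edges B" using ab(1) by (simp add: adj_def)
  qed
  moreover have "card (verts B) = 4"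
    using is_iso_card[OF assms(2)] assms(3) unfolding is_K4_def by (elim conjE) simp
  moreover have "finite (verts B)" using assms(1) by (simp add: wf_graph_def)
  ultimately show ?thesis unfolding is_K4_def by blast
qed

text \<open>\<open>K4\<^sup>w\<close> is the prism, and \<open>\<sigma>\<close> exchanges its two triangles.\<close>

lemma is_K4_replacement_swap:
  assumes K: "is_K4 H" and r: "triangle_replacement H w C x1 x2 x3 u1 u2 u3"
  obtains \<sigma> where "is_iso \<sigma> C C" "\<forall>z\<in>verts C. z \<in> verts H \<longleftrightarrow> \<sigma> z \<notin> verts H - {w}"
proof -
  interpret r: triangle_replacement H w C x1 x2 x3 u1 u2 u3 by (fact r)
  have VHw: "verts H - {w} = {x1, x2, x3}" using is_K4_nbrs[OF K r.v_in_G] r.nbrs_v by simp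
  have VC: "verts C = {x1, x2, x3, u1, u2, u3}" using r.verts_H VHw by auto
  define \<sigma> where "\<sigma> = (\<lambda>z. if z = x1 then u1 else if z = x2 then u2 else if z = x3 then u3 else
      if z = u1 then x1 else if z = u2 then x2 else if z = u3 then x3 else z)"
  note ne = r.x_ne_new r.x_ne_new[symmetric] r.x_ne r.x_ne[symmetric]
    r.new_ne r.new_ne[symmetric]
  have s: "\<sigma> x1 = u1" "\<sigma> x2 = u2" "\<sigma> x3 = u3" "\<sigma> u1 = x1" "\<sigma> u2 = x2" "\<sigma> u3 = x3"
    unfolding \<sigma>_def using ne by simp_all
  have adj_xx: "adj C a c \<longleftrightarrow> a \<noteq> c" if "a \<in> {x1, x2, x3}" "c \<in> {x1, x2, x3}" for a c
    using that r.adj_old_old is_K4_adj[OF K] r.x_in_G r.x_ne_v by auto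
  have adj_\<sigma>: "adj C (\<sigma> a) (\<sigma> c) \<longleftrightarrow> adj C a c" if "a \<in> verts C" "c \<in> verts C" for a c
    using that unfolding VC
    by (simp only: insert_iff empty_iff; elim disjE; simp only: s;
        simp add: adj_xx r.adj_new r.adj_new' ne)
  have "\<sigma> (\<sigma> z) = z" "\<sigma> z \<in> verts C" if "z \<in> verts C" for z
    using that s unfolding VC by auto
  then have "bij_betw \<sigma> (verts C) (verts C)"
    by (intro bij_betw_byWitness[where f' = \<sigma>]) auto
  moreover have "\<forall>z\<in>verts C. z \<in> verts H \<longleftrightarrow> \<sigma> z \<notin> verts H - {w}"
    unfolding VHw VC using s ne r.new_notin_G r.x_in_G by auto
  ultimately show ?thesis using that adj_\<sigma> unfolding is_iso_def by blast
qed

section \<open>Transport along isomorphisms and commutation of replacements\<close>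

lemma fresh_nats:
  assumes "finite (S :: nat set)"
  obtains m1 m2 m3 where "distinct [m1, m2, m3]" "m1 \<notin> S" "m2 \<notin> S" "m3 \<notin> S"
proof -
  define n where "n = Suc (Max (insert 0 S))"
  have "k \<notin> S" if "k \<ge> n" for k
  proof
    assume "k \<in> S"
    then have "k \<le> Max (insert 0 S)" using assms by simp
    then show False using that unfolding n_def by simp
  qed
  then show ?thesis by (intro that[of n "Suc n" "Suc (Suc n)"]) simp_all
qed

lemma is_iso_nbrs_eq:
  assumes "wf_graph A" "wf_graph B" "is_iso f A B" "v \<in> verts A"
    and "{x1, x2, x3} \<subseteq> verts A" "nbrs B (f v) = {f x1, f x2, f x3}"
  shows "nbrs A v = {x1, x2, x3}"
proof -
  have "f ` nbrs A v = f ` {x1, x2, x3}" using is_iso_nbrs[OF assms(1-4)] assms(6) by simp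
  then show ?thesis
    using inj_on_image_eq_iff[OF is_iso_inj_on[OF assms(3)] wf_graph_nbrs_subset[OF assms(1)] assms(5)]
    by blast
qed

lemma triangle_replacement_bij_betw:
  assumes iso: "is_iso f A B"
    and rA: "triangle_replacement A v A2 x1 x2 x3 m1 m2 m3"
    and rB: "triangle_replacement B (f v) B2 (f x1) (f x2) (f x3) w1 w2 w3"
    and gf: "\<forall>z\<in>verts A. g z = f z" and gm: "g m1 = w1" "g m2 = w2" "g m3 = w3"
  shows "bij_betw g (verts A2) (verts B2)"
proof -
  interpret rA: triangle_replacement A v A2 x1 x2 x3 m1 m2 m3 by (fact rA)
  interpret rB: triangle_replacement B "f v" B2 "f x1" "f x2" "f x3" w1 w2 w3 by (fact rB)
  have "bij_betw f (verts A - {v}) (verts B - {f v})"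
    using bij_betw_DiffI[OF is_iso_bij[OF iso], of "{v}" "{f v}"] rA.v_in_G is_iso_in[OF iso]
    by (auto simp: bij_betw_def)
  then have "bij_betw g (verts A - {v}) (verts B - {f v})"
    using gf by (metis (no_types, lifting) DiffD1 bij_betw_cong)
  moreover have "bij_betw g {m1, m2, m3} {w1, w2, w3}"
    unfolding bij_betw_def using gm rA.new_ne rB.new_ne by (auto simp: inj_on_def)
  ultimately show ?thesis
    unfolding rA.verts_H rB.verts_H using rB.new_notin_G by (intro bij_betw_combine) auto
qed

lemma triangle_replacement_is_iso:
  assumes iso: "is_iso f A B"
    and rA: "triangle_replacement A v A2 x1 x2 x3 m1 m2 m3"
    and rB: "triangle_replacement B (f v) B2 (f x1) (f x2) (f x3) w1 w2 w3"
    and gf: "\<forall>z\<in>verts A. g z = f z" and gm: "g m1 = w1" "g m2 = w2" "g m3 = w3"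
  shows "is_iso g A2 B2"
proof -
  interpret rA: triangle_replacement A v A2 x1 x2 x3 m1 m2 m3 by (fact rA)
  interpret rB: triangle_replacement B "f v" B2 "f x1" "f x2" "f x3" w1 w2 w3 by (fact rB)
  have fw: "f z \<noteq> w1" "f z \<noteq> w2" "f z \<noteq> w3" if "z \<in> verts A" for z
    using is_iso_in[OF iso that] rB.new_notin_G by auto
  note f_eq = is_iso_eq_iff[OF iso]
  \<comment> \<open>these turn the description \<open>adj_H\<close> of \<open>B2\<close> term by term into that of \<open>A2\<close>\<close>
  have key: "(g a = w1 \<longleftrightarrow> a = m1) \<and> (g a = w2 \<longleftrightarrow> a = m2) \<and> (g a = w3 \<longleftrightarrow> a = m3) \<and>
      (g a = f x1 \<longleftrightarrow> a = x1) \<and> (g a = f x2 \<longleftrightarrow> a = x2) \<and> (g a = f x3 \<longleftrightarrow> a = x3) \<and> g a \<noteq> f v"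
    if a: "a \<in> verts A2" for a
  proof -
    consider "a \<in> {m1, m2, m3}" | "a \<in> verts A" "a \<noteq> v" using a rA.mem_verts_H by blast
    then show ?thesis
    proof cases
      case 1
      then show ?thesis using gm rB.new_ne rA.x_ne_new fw[OF rA.x_in_G(1)] fw[OF rA.x_in_G(2)]
          fw[OF rA.x_in_G(3)] fw[OF rA.v_in_G] by auto
    next
      case 2
      then show ?thesis using gf fw f_eq[OF _ rA.x_in_G(1)] f_eq[OF _ rA.x_in_G(2)]
          f_eq[OF _ rA.x_in_G(3)] f_eq[OF _ rA.v_in_G] rA.new_notin_G by auto
    qed
  qed
  have old: "adj B (g a) (g b) \<longleftrightarrow> adj A a b" if "a \<in> verts A2" "b \<in> verts A2" for a b
  proof (cases "a \<in> verts A \<and> b \<in> verts A")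
    case True
    then show ?thesis using is_iso_adj[OF iso] gf by simp
  next
    case False
    then have "g a \<notin> verts B \<or> g b \<notin> verts B" "a \<notin> verts A \<or> b \<notin> verts A"
      using that rA.mem_verts_H gm rB.new_notin_G by auto
    then show ?thesis using wf_graph_adjD[OF rA.wf_G] wf_graph_adjD[OF rB.wf_G] by blast
  qed
  have "bij_betw g (verts A2) (verts B2)" by (rule triangle_replacement_bij_betw[OF assms])
  moreover have "adj B2 (g a) (g b) \<longleftrightarrow> adj A2 a b" if "a \<in> verts A2" "b \<in> verts A2" for a b
  proof -
    have "a \<noteq> v" "b \<noteq> v" using that rA.v_notin_H by blast+
    then show ?thesis
      unfolding rA.adj_H rB.adj_H by (simp only: key[OF that(1)] key[OF that(2)] old[OF that] simp_thms)
  qed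
  ultimately show ?thesis unfolding is_iso_def by blast
qed

lemma triangle_replacement_iso:
  assumes iso: "is_iso f A B" and cA: "cubic A" and v: "v \<in> verts A"
    and rB: "triangle_replacement B (f v) B2 y1 y2 y3 w1 w2 w3" and X: "finite X"
  obtains A2 g x1 x2 x3 m1 m2 m3 where "triangle_replacement A v A2 x1 x2 x3 m1 m2 m3" "is_iso g A2 B2"
    "g m1 = w1" "g m2 = w2" "g m3 = w3" "f x1 = y1" "f x2 = y2" "f x3 = y3"
    "\<forall>z\<in>verts A. g z = f z" "m1 \<notin> X" "m2 \<notin> X" "m3 \<notin> X"
proof -
  interpret rB: triangle_replacement B "f v" B2 y1 y2 y3 w1 w2 w3 by (fact rB)
  obtain x1 x2 x3 where x: "x1 \<in> verts A" "f x1 = y1" "x2 \<in> verts A" "f x2 = y2" "x3 \<in> verts A" "f x3 = y3"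
    using is_iso_surj[OF iso] rB.x_in_G by metis
  have "finite (verts A \<union> X)" using cA X unfolding cubic_def wf_graph_def by simp
  then obtain m1 m2 m3 where m: "distinct [m1, m2, m3]"
      "m1 \<notin> verts A \<union> X" "m2 \<notin> verts A \<union> X" "m3 \<notin> verts A \<union> X"
    by (rule fresh_nats)
  define A2 where "A2 = (verts A - {v} \<union> {m1, m2, m3}, {e \<in> edges A. v \<notin> e} \<union>
      {{m1, m2}, {m2, m3}, {m3, m1}, {m1, x1}, {m2, x2}, {m3, x3}})"
  define g where "g = (\<lambda>z. if z = m1 then w1 else if z = m2 then w2 else if z = m3 then w3 else f z)"
  have "nbrs A v = {x1, x2, x3}"
    using is_iso_nbrs_eq[OF cubic_wf_graph[OF cA] rB.wf_G iso v] x rB.nbrs_v by simp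
  moreover have "distinct [x1, x2, x3]" using rB.x_ne x by auto
  ultimately have rA: "triangle_replacement A v A2 x1 x2 x3 m1 m2 m3"
    using cA v m unfolding A2_def by unfold_locales simp_all
  have g: "g m1 = w1" "g m2 = w2" "g m3 = w3" "\<forall>z\<in>verts A. g z = f z"
    using m unfolding g_def by auto
  have "is_iso g A2 B2"
    using triangle_replacement_is_iso[OF iso rA _ g(4,1-3)] rB x by simp
  then show ?thesis using that rA g x m by blast
qed

lemma replace_by_triangle_iso:
  assumes iso: "is_iso f A B" and cA: "cubic A" and v: "v \<in> verts A"
    and r: "replace_by_triangle B (f v) B2"
  obtains A2 g where "replace_by_triangle A v A2" "is_iso g A2 B2" "\<forall>z\<in>verts A - {v}. g z = f z"
    "\<forall>z\<in>verts A2 - verts A. g z \<in> verts B2 - verts B"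
proof -
  obtain y1 y2 y3 w1 w2 w3 where rB: "triangle_replacement B (f v) B2 y1 y2 y3 w1 w2 w3"
    by (rule replace_by_triangleE[OF r])
  obtain A2 g x1 x2 x3 m1 m2 m3 where p: "triangle_replacement A v A2 x1 x2 x3 m1 m2 m3" "is_iso g A2 B2"
     "g m1 = w1" "g m2 = w2" "g m3 = w3" "\<forall>z\<in>verts A. g z = f z"
    by (rule triangle_replacement_iso[OF iso cA v rB finite.emptyI])
  have "g z \<in> verts B2 - verts B" if "z \<in> verts A2 - verts A" for z
  proof -
    have "z = m1 \<or> z = m2 \<or> z = m3" using that triangle_replacement.mem_verts_H[OF p(1)] by blast
    then show ?thesis
      using p(3-5) triangle_replacement.new_in_H[OF rB] triangle_replacement.new_notin_G[OF rB] by auto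
  qed
  then show ?thesis
    using that triangle_replacement.replace_by_triangle[OF p(1)] p(2,6) by blast
qed

lemma replace_by_triangle_iso_triangle:
  assumes r: "replace_by_triangle E t H'" and wH: "wf_graph H" and f: "is_iso f H' H"
    and S: "S \<in> triangles H" and x: "x \<in> verts E" "x \<noteq> t" "f x \<in> S"
  obtains S0 where "S0 \<in> triangles E" "x \<in> S0" "t \<notin> S0" "S = f ` S0"
proof -
  obtain y1 y2 y3 t1 t2 t3 where "triangle_replacement E t H' y1 y2 y3 t1 t2 t3"
    by (rule replace_by_triangleE[OF r])
  then interpret r: triangle_replacement E t H' y1 y2 y3 t1 t2 t3 .
  obtain S0 where S0: "S0 \<in> triangles H'" "x \<in> S0" "S = f ` S0"
    using is_iso_triangle_image[OF r.wf_H wH f S r.old_in_H[OF x(1,2)] x(3)] by blast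
  have "S0 \<noteq> {t1, t2, t3}" using S0(2) x(1) r.new_notin_G by blast
  then have "S0 \<in> triangles E" "t \<notin> S0" using S0(1) r.triangles_H by blast+
  then show ?thesis using that S0(2,3) by blast
qed

lemma filter_union_commute:
  "\<forall>e\<in>N1. w \<notin> e \<Longrightarrow> \<forall>e\<in>N2. u \<notin> e \<Longrightarrow>
   {e \<in> {e \<in> E. u \<notin> e} \<union> N1. w \<notin> e} \<union> N2 = {e \<in> {e \<in> E. w \<notin> e} \<union> N2. u \<notin> e} \<union> N1"
  by blast

lemma filter_union_commute_insert:
  "\<forall>e\<in>N1. w \<notin> e \<Longrightarrow> \<forall>e\<in>N2. u \<notin> e \<Longrightarrow> w \<in> A \<Longrightarrow> u \<in> B \<Longrightarrow> u \<notin> C \<Longrightarrow> w \<notin> C \<Longrightarrow>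
   {e \<in> {e \<in> E. u \<notin> e} \<union> insert A N1. w \<notin> e} \<union> insert C N2 =
   {e \<in> {e \<in> E. w \<notin> e} \<union> insert B N2. u \<notin> e} \<union> insert C N1"
  by blast

lemma triangle_replacement_commute_nonadjacent:
  assumes r1: "triangle_replacement G u G1 x1 x2 x3 u1 u2 u3"
    and r2: "triangle_replacement G1 w G2 y1 y2 y3 w1 w2 w3"
    and w: "w \<in> verts G" "w \<noteq> u" "w \<notin> {x1, x2, x3}" and wu: "u \<notin> {w1, w2, w3}"
  shows "\<exists>G1'. replace_by_triangle G w G1' \<and> replace_by_triangle G1' u G2 \<and>
    verts G1' = verts G - {w} \<union> {w1, w2, w3}"
proof -
  define G1' where "G1' = (verts G - {w} \<union> {w1, w2, w3}, {e \<in> edges G. w \<notin> e} \<union>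
      {{w1, w2}, {w2, w3}, {w3, w1}, {w1, y1}, {w2, y2}, {w3, y3}})"
  interpret r1: triangle_replacement G u G1 x1 x2 x3 u1 u2 u3 by (fact r1)
  interpret r2: triangle_replacement G1 w G2 y1 y2 y3 w1 w2 w3 by (fact r2)
  have nuw: "\<not> adj G u w" using r1.adj_v[of w] w(3) adj_sym[of G u w] by auto
  have "nbrs G w = nbrs G1 w" unfolding nbrs_adj using r1.adj_old[OF w(1,2)] w(3) nuw by auto
  then have nw: "nbrs G w = {y1, y2, y3}" using r2.nbrs_v by simp
  then have yu: "u \<notin> {y1, y2, y3}" using nuw by (auto simp: nbrs_adj)
  have "w1 \<notin> verts G" "w2 \<notin> verts G" "w3 \<notin> verts G"
    using r2.new_notin_G wu r1.mem_verts_H by blast+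
  then interpret ra: triangle_replacement G w G1' y1 y2 y3 w1 w2 w3
    unfolding G1'_def using r1.cubic_G w(1) nw r2.distinct_x r2.distinct_new by unfold_locales simp_all
  have "nbrs G1' u = {x1, x2, x3}"
    unfolding nbrs_adj ra.adj_old[OF r1.v_in_G w(2)[symmetric]] using yu r1.adj_v w(3) by auto
  moreover have "u1 \<notin> verts G1'" "u2 \<notin> verts G1'" "u3 \<notin> verts G1'"
    using ra.mem_verts_H r1.new_notin_G r1.new_in_H r2.new_notin_G by blast+
  moreover have "verts G2 = verts G1' - {u} \<union> {u1, u2, u3}"
    unfolding r2.verts_H r1.verts_H ra.verts_H using wu w r1.new_notin_G by blast
  moreover have "edges G2 = {e \<in> edges G1'. u \<notin> e} \<union> {{u1, u2}, {u2, u3}, {u3, u1}, {u1, x1}, {u2, x2}, {u3, x3}}"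
  proof -
    have "\<forall>e\<in>{{u1, u2}, {u2, u3}, {u3, u1}, {u1, x1}, {u2, x2}, {u3, x3}}. w \<notin> e"
      using w r1.new_notin_G by auto
    moreover have "\<forall>e\<in>{{w1, w2}, {w2, w3}, {w3, w1}, {w1, y1}, {w2, y2}, {w3, y3}}. u \<notin> e"
      using wu yu by auto
    ultimately show ?thesis unfolding r2.edges_H r1.edges_H ra.edges_H by (rule filter_union_commute)
  qed
  ultimately have "triangle_replacement G1' u G2 x1 x2 x3 u1 u2 u3"
    using ra.cubic_H ra.old_in_H[OF r1.v_in_G] w(2) r1.distinct_x r1.distinct_new
    by unfold_locales simp_all
  then show ?thesis
    by (intro exI[of _ G1'] conjI ra.replace_by_triangle triangle_replacement.replace_by_triangle ra.verts_H)
qed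

text \<open>Adjacent \<open>u\<close> and \<open>w\<close>, indexed so that the edge \<open>uw\<close> of \<open>G\<close> becomes \<open>u1 w\<close> in \<open>G1\<close> and
  \<open>w1 u\<close> in the commuted intermediate graph.\<close>

lemma triangle_replacement_commute_along_edge:
  assumes r1: "triangle_replacement G u G1 w x2 x3 u1 u2 u3"
    and r2: "triangle_replacement G1 w G2 u1 y2 y3 w1 w2 w3"
    and wu: "u \<notin> {w1, w2, w3}"
  shows "\<exists>G1'. replace_by_triangle G w G1' \<and> replace_by_triangle G1' u G2 \<and>
    verts G1' = verts G - {w} \<union> {w1, w2, w3}"
proof -
  define G1' where "G1' = (verts G - {w} \<union> {w1, w2, w3}, {e \<in> edges G. w \<notin> e} \<union>
      {{w1, w2}, {w2, w3}, {w3, w1}, {w1, u}, {w2, y2}, {w3, y3}})"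
  interpret r1: triangle_replacement G u G1 w x2 x3 u1 u2 u3 by (fact r1)
  interpret r2: triangle_replacement G1 w G2 u1 y2 y3 w1 w2 w3 by (fact r2)
  have w: "w \<in> verts G" "w \<noteq> u" using r1.x_in_G(1) r1.x_ne_v(1) by simp_all
  have yu: "y2 \<noteq> u" "y3 \<noteq> u" using r2.x_in_G r1.v_notin_H by blast+
  have "adj G z w \<longleftrightarrow> z = u \<or> z = y2 \<or> z = y3" for z
  proof -
    have "adj G u w" using r1.adj_v adj_sym[of G] by blast
    moreover have "\<not> adj G u1 w" using r1.new_notin_G wf_graph_adjD[OF r1.wf_G] by blast
    ultimately show ?thesis
      using r1.adj_old[OF w, of z] r2.adj_v[of z] r1.x_ne r2.x_ne by auto
  qed
  then have nw: "nbrs G w = {u, y2, y3}" unfolding nbrs_adj by auto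
  have wG: "w1 \<notin> verts G" "w2 \<notin> verts G" "w3 \<notin> verts G"
    using r2.new_notin_G wu r1.mem_verts_H by blast+
  interpret ra: triangle_replacement G w G1' u y2 y3 w1 w2 w3
    unfolding G1'_def using r1.cubic_G w nw yu r2.x_ne r2.distinct_new wG
    by unfold_locales simp_all
  have "nbrs G1' u = {w1, x2, x3}"
    unfolding nbrs_adj ra.adj_old[OF r1.v_in_G w(2)[symmetric]] using yu r1.adj_v r1.x_ne by auto
  moreover have "u1 \<notin> verts G1'" "u2 \<notin> verts G1'" "u3 \<notin> verts G1'"
    using ra.mem_verts_H r1.new_notin_G r1.new_in_H r2.new_notin_G by blast+
  moreover have "verts G2 = verts G1' - {u} \<union> {u1, u2, u3}"
    unfolding r2.verts_H r1.verts_H ra.verts_H using wu w r1.new_notin_G by blast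
  moreover have "edges G2 = {e \<in> edges G1'. u \<notin> e} \<union> {{u1, u2}, {u2, u3}, {u3, u1}, {u1, w1}, {u2, x2}, {u3, x3}}"
  proof -
    have N1: "\<forall>e\<in>{{u1, u2}, {u2, u3}, {u3, u1}, {u2, x2}, {u3, x3}}. w \<notin> e"
      using r1.x_ne w(1) r1.new_notin_G by auto
    have N2: "\<forall>e\<in>{{w1, w2}, {w2, w3}, {w3, w1}, {w2, y2}, {w3, y3}}. u \<notin> e"
      using wu yu by auto
    have "u \<notin> {w1, u1}" "w \<notin> {w1, u1}" using wu r1.new_notin_G(1) w(1) r1.v_in_G wG by auto
    from filter_union_commute_insert[OF N1 N2 _ _ this(1,2), of "{u1, w}" "{w1, u}" "edges G"]
    show ?thesis unfolding r2.edges_H r1.edges_H ra.edges_H by (simp add: insert_commute)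
  qed
  ultimately have "triangle_replacement G1' u G2 w1 x2 x3 u1 u2 u3"
    using ra.cubic_H ra.old_in_H[OF r1.v_in_G] w(2) r1.x_ne r1.distinct_new wG(1) r1.x_in_G
    by unfold_locales auto
  then show ?thesis
    by (intro exI[of _ G1'] conjI ra.replace_by_triangle triangle_replacement.replace_by_triangle ra.verts_H)
qed

lemma triangle_replacement_commute_adjacent:
  assumes r1: "triangle_replacement G u G1 w x2 x3 u1 u2 u3"
    and r2: "triangle_replacement G1 w G2 y1 y2 y3 w1 w2 w3"
    and wu: "u \<notin> {w1, w2, w3}"
  shows "\<exists>G1'. replace_by_triangle G w G1' \<and> replace_by_triangle G1' u G2 \<and>
    verts G1' = verts G - {w} \<union> {w1, w2, w3}"
proof -
  have "adj G1 u1 w" using triangle_replacement.adj_new'(1)[OF r1] by simp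
  then have "u1 \<in> nbrs G1 w" by (simp add: nbrs_adj)
  then have "u1 \<in> {y1, y2, y3}" using triangle_replacement.nbrs_v[OF r2] by simp
  then consider "y1 = u1" | "y2 = u1" | "y3 = u1" by blast
  then show ?thesis
  proof cases
    case 1
    show ?thesis using triangle_replacement_commute_along_edge[OF r1 r2[unfolded 1] wu] .
  next
    case 2
    have "u \<notin> {w2, w1, w3}" using wu by auto
    from triangle_replacement_commute_along_edge[OF r1 triangle_replacement_swap12[OF r2, unfolded 2] this]
    show ?thesis by (simp add: insert_commute)
  next
    case 3
    have "u \<notin> {w3, w1, w2}" using wu by auto
    from triangle_replacement_commute_along_edge[OF r1
        triangle_replacement_swap12[OF triangle_replacement_swap23[OF r2], unfolded 3] this]
    show ?thesis by (simp add: insert_commute)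
  qed
qed

lemma triangle_replacement_commute:
  assumes r1: "triangle_replacement G u G1 x1 x2 x3 u1 u2 u3"
    and r2: "triangle_replacement G1 w G2 y1 y2 y3 w1 w2 w3"
    and w: "w \<in> verts G" "w \<noteq> u" and wu: "u \<notin> {w1, w2, w3}"
  shows "\<exists>G1'. replace_by_triangle G w G1' \<and> replace_by_triangle G1' u G2 \<and>
    verts G1' = verts G - {w} \<union> {w1, w2, w3}"
proof (cases "w \<in> {x1, x2, x3}")
  case False
  show ?thesis using triangle_replacement_commute_nonadjacent[OF r1 r2 w False wu] .
next
  case True
  then consider "w = x1" | "w = x2" | "w = x3" by blast
  then show ?thesis
  proof cases
    case 1
    show ?thesis using triangle_replacement_commute_adjacent[OF r1[folded 1] r2 wu] .
  next
    case 2
    show ?thesis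
      using triangle_replacement_commute_adjacent[OF triangle_replacement_swap12[OF r1, folded 2] r2 wu] .
  next
    case 3
    show ?thesis
      using triangle_replacement_commute_adjacent[OF triangle_replacement_swap12[OF
          triangle_replacement_swap23[OF r1], folded 3] r2 wu] .
  qed
qed

text \<open>The new vertices of \<open>G2\<close> may include \<open>u\<close>, so commuting the replacements only yields a
  graph isomorphic to \<open>G2\<close>; \<open>k\<close> fixes the vertices of \<open>G1\<close> and sends the new vertices of the
  first step to those of \<open>G2\<close>.\<close>

lemma replace_by_triangle_commute:
  assumes r1: "replace_by_triangle G u G1" and r2: "replace_by_triangle G1 w G2"
    and w: "w \<in> verts G" "w \<noteq> u"
  obtains G1' G2' k where "replace_by_triangle G w G1'" "replace_by_triangle G1' u G2'" "is_iso k G2' G2"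
    "\<forall>z\<in>verts G2'. z \<in> verts G1 \<longrightarrow> k z = z"
    "\<forall>z\<in>verts G2'. z \<in> verts G1' - verts G \<longrightarrow> k z \<in> verts G2 - verts G1"
    "\<forall>z\<in>verts G2'. z \<notin> verts G1' \<longrightarrow> z \<in> verts G1 - verts G"
proof -
  obtain x1 x2 x3 u1 u2 u3 where r1': "triangle_replacement G u G1 x1 x2 x3 u1 u2 u3"
    by (rule replace_by_triangleE[OF r1])
  obtain y1 y2 y3 w1 w2 w3 where "triangle_replacement G1 w G2 y1 y2 y3 w1 w2 w3"
    by (rule replace_by_triangleE[OF r2])
  then have r2': "triangle_replacement G1 (id w) G2 y1 y2 y3 w1 w2 w3" by simp
  have c1: "cubic G1" using triangle_replacement.cubic_H[OF r1'] .
  have wG1: "w \<in> verts G1" using triangle_replacement.old_in_H[OF r1'] w by blast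
  obtain G2' k x1' x2' x3' m1 m2 m3 where p: "triangle_replacement G1 w G2' x1' x2' x3' m1 m2 m3"
    "is_iso k G2' G2" "k m1 = w1" "k m2 = w2" "k m3 = w3" "\<forall>z\<in>verts G1. k z = id z"
    "m1 \<notin> {u}" "m2 \<notin> {u}" "m3 \<notin> {u}"
    by (rule triangle_replacement_iso[OF is_iso_id c1 wG1 r2' finite.insertI[OF finite.emptyI]])
  obtain G1' where c: "replace_by_triangle G w G1'" "replace_by_triangle G1' u G2'"
      "verts G1' = verts G - {w} \<union> {m1, m2, m3}"
    using triangle_replacement_commute[OF r1' p(1) w] p(7-9) by auto
  interpret p: triangle_replacement G1 w G2' x1' x2' x3' m1 m2 m3 by (fact p(1))
  interpret r2: triangle_replacement G1 "id w" G2 y1 y2 y3 w1 w2 w3 by (fact r2')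
  have "k z \<in> verts G2 - verts G1" if "z \<in> verts G1' - verts G" for z
  proof -
    have "z = m1 \<or> z = m2 \<or> z = m3" using that c(3) by blast
    then show ?thesis using p(3-5) r2.new_notin_G r2.new_in_H by auto
  qed
  moreover have "\<forall>z\<in>verts G2'. z \<notin> verts G1' \<longrightarrow> z \<in> verts G1 - verts G"
    using p.verts_H c(3) by blast
  ultimately show ?thesis using that c(1,2) p(2,6) by simp
qed

section \<open>Ladders\<close>

inductive ladder :: "graph \<Rightarrow> bool" where
  K4: "is_K4 G \<Longrightarrow> ladder G"
| step: "ladder H \<Longrightarrow> w \<in> \<Union>(triangles H) \<Longrightarrow> replace_by_triangle H w G \<Longrightarrow> ladder G"
| iso: "ladder H \<Longrightarrow> graph_iso H G \<Longrightarrow> ladder G"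

definition two_disjoint_triangles :: "graph \<Rightarrow> bool" where
  "two_disjoint_triangles G \<longleftrightarrow> card (triangles G) = 2 \<and>
     (\<forall>S\<in>triangles G. \<forall>T\<in>triangles G. S \<noteq> T \<longrightarrow> S \<inter> T = {})"

definition ladder_shape :: "graph \<Rightarrow> bool" where
  "ladder_shape G \<longleftrightarrow> cubic G \<and> (is_K4 G \<or> card (verts G) \<ge> 6 \<and> two_disjoint_triangles G)"

lemma card_2_other:
  assumes "card A = 2" "a \<in> A"
  obtains b where "A = {a, b}" "b \<noteq> a"
proof -
  obtain x y where xy: "A = {x, y}" "x \<noteq> y" using assms(1) card_2_iff by metis
  show ?thesis
  proof (cases "a = x")
    case True
    then show ?thesis using that[of y] xy by simp
  next
    case False
    then have "a = y" using assms(2) xy(1) by blast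
    then show ?thesis using that[of x] xy by (simp add: insert_commute)
  qed
qed

lemma two_disjoint_trianglesE:
  assumes "two_disjoint_triangles G" "S \<in> triangles G"
  obtains T where "triangles G = {S, T}" "S \<inter> T = {}" "S \<noteq> T"
proof -
  have "card (triangles G) = 2" using assms(1) unfolding two_disjoint_triangles_def by simp
  from this assms(2) obtain T where "triangles G = {S, T}" "T \<noteq> S" by (rule card_2_other)
  moreover have "S \<inter> T = {}"
    using assms calculation unfolding two_disjoint_triangles_def by (metis insertI1 insertI2 singletonI)
  ultimately show ?thesis using that by blast
qed

lemma ladder_shape_replace:
  assumes H: "ladder_shape H" and w: "w \<in> \<Union>(triangles H)" and r: "replace_by_triangle H w G"
  shows "ladder_shape G"
proof -
  obtain x1 x2 x3 u1 u2 u3 where "triangle_replacement H w G x1 x2 x3 u1 u2 u3"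
    by (rule replace_by_triangleE[OF r])
  then interpret r: triangle_replacement H w G x1 x2 x3 u1 u2 u3 .
  have new_disjoint: "A \<inter> {u1, u2, u3} = {} \<and> A \<noteq> {u1, u2, u3}" if "A \<in> triangles H" for A
    using triangles_subset_verts[OF that] card_triangle[OF that] r.new_notin_G by auto
  obtain A where A: "{T \<in> triangles H. w \<notin> T} = {A}" "A \<in> triangles H"
  proof (cases "is_K4 H")
    case True
    have "{T \<in> triangles H. w \<notin> T} = {verts H - {w}}"
    proof (intro equalityI subsetI)
      fix T assume "T \<in> {T \<in> triangles H. w \<notin> T}"
      then show "T \<in> {verts H - {w}}" using is_K4_triangle_avoiding[OF True _ r.v_in_G] by simp
    qed (use is_K4_triangles[OF True r.v_in_G] in simp)
    then show ?thesis using that is_K4_triangles[OF True r.v_in_G] by simp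
  next
    case False
    then have two: "two_disjoint_triangles H" using H unfolding ladder_shape_def by blast
    obtain S where S: "S \<in> triangles H" "w \<in> S" using w by blast
    obtain T where "triangles H = {S, T}" "S \<inter> T = {}" "S \<noteq> T"
      by (rule two_disjoint_trianglesE[OF two S(1)])
    then have "{X \<in> triangles H. w \<notin> X} = {T}" "T \<in> triangles H" using S(2) by auto
    then show ?thesis by (rule that)
  qed
  have tG: "triangles G = {{u1, u2, u3}, A}" using r.triangles_H A(1) by simp
  have ne: "A \<noteq> {u1, u2, u3}" and dj: "A \<inter> {u1, u2, u3} = {}" using new_disjoint[OF A(2)] by simp_all
  have "card (triangles G) = 2" using ne by (simp add: tG)
  moreover have "\<forall>S\<in>triangles G. \<forall>T\<in>triangles G. S \<noteq> T \<longrightarrow> S \<inter> T = {}"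
    using dj by (auto simp: tG)
  ultimately have "two_disjoint_triangles G" unfolding two_disjoint_triangles_def by blast
  moreover have "card (verts G) \<ge> 6"
    using H r.card_verts_H unfolding ladder_shape_def is_K4_def by auto
  ultimately show ?thesis using r.cubic_H unfolding ladder_shape_def by simp
qed

lemma ladder_shape_iso:
  assumes H: "ladder_shape H" and iso: "graph_iso H G"
  shows "ladder_shape G"
proof -
  have cH: "cubic H" using H unfolding ladder_shape_def by simp
  obtain f where f: "is_iso f H G" and cG: "cubic G" using graph_iso_cubic[OF cH iso] by blast
  have wf: "wf_graph H" "wf_graph G" using cH cG cubic_wf_graph by blast+
  show ?thesis
  proof (cases "is_K4 H")
    case True
    then show ?thesis using is_iso_is_K4[OF wf(2) f] cG unfolding ladder_shape_def by blast
  next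
    case False
    then have H6: "card (verts H) \<ge> 6" and two: "two_disjoint_triangles H"
      using H unfolding ladder_shape_def by blast+
    have "S \<inter> T = {}" if ST: "S \<in> triangles G" "T \<in> triangles G" "S \<noteq> T" for S T
    proof -
      obtain S0 where S0: "S0 \<in> triangles H" "S = f ` S0"
        using ST(1) unfolding is_iso_triangles[OF wf f] by blast
      obtain T0 where T0: "T0 \<in> triangles H" "T = f ` T0"
        using ST(2) unfolding is_iso_triangles[OF wf f] by blast
      have "S0 \<noteq> T0" using ST(3) S0(2) T0(2) by blast
      then have "S0 \<inter> T0 = {}" using two S0(1) T0(1) unfolding two_disjoint_triangles_def by blast
      moreover have "f ` (S0 \<inter> T0) = f ` S0 \<inter> f ` T0"
        using inj_on_image_Int[OF is_iso_inj_on[OF f] triangles_subset_verts[OF S0(1)]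
            triangles_subset_verts[OF T0(1)]] .
      ultimately show ?thesis using S0(2) T0(2) by simp
    qed
    then have "two_disjoint_triangles G"
      using two is_iso_card_triangles[OF wf f] unfolding two_disjoint_triangles_def by simp
    then show ?thesis using H6 is_iso_card[OF f] cG unfolding ladder_shape_def by simp
  qed
qed

lemma ladder_imp_shape: "ladder G \<Longrightarrow> ladder_shape G"
proof (induction rule: ladder.induct)
  case (K4 G)
  then show ?case by (simp add: ladder_shape_def is_K4_cubic)
next
  case (step H w G)
  then show ?case using ladder_shape_replace by blast
next
  case (iso H G)
  then show ?case using ladder_shape_iso by blast
qed

text \<open>\<open>T\<close> was created by the last step of a ladder construction of \<open>C\<close>: \<open>C \<cong> E\<^sup>t\<close> for a
  ladder \<open>E\<close>, with the new triangle sent onto \<open>T\<close>.\<close>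

definition last_triangle :: "graph \<Rightarrow> nat set \<Rightarrow> bool" where
  "last_triangle C T \<longleftrightarrow> (\<exists>E t C' f. ladder E \<and> t \<in> verts E \<and> replace_by_triangle E t C' \<and>
     is_iso f C' C \<and> (\<forall>x\<in>verts C'. x \<in> verts E \<longleftrightarrow> f x \<notin> T))"

lemma last_triangle_new:
  assumes "ladder H" "triangle_replacement H w G x1 x2 x3 u1 u2 u3"
  shows "last_triangle G {u1, u2, u3}"
proof -
  interpret r: triangle_replacement H w G x1 x2 x3 u1 u2 u3 by (fact assms(2))
  have "\<forall>x\<in>verts G. x \<in> verts H \<longleftrightarrow> id x \<notin> {u1, u2, u3}" using r.mem_verts_H r.new_notin_G by auto
  then show ?thesis
    unfolding last_triangle_def using assms(1) r.v_in_G r.replace_by_triangle is_iso_id by blast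
qed

lemma last_triangle_K4:
  assumes "is_K4 H" "triangle_replacement H w G x1 x2 x3 u1 u2 u3"
  shows "last_triangle G (verts H - {w})"
proof -
  obtain \<sigma> where "is_iso \<sigma> G G" "\<forall>z\<in>verts G. z \<in> verts H \<longleftrightarrow> \<sigma> z \<notin> verts H - {w}"
    by (rule is_K4_replacement_swap[OF assms])
  then show ?thesis
    unfolding last_triangle_def
    using ladder.K4[OF assms(1)] triangle_replacement.v_in_G[OF assms(2)]
      triangle_replacement.replace_by_triangle[OF assms(2)] by blast
qed

lemma last_triangle_iso:
  assumes "last_triangle H T" "T \<subseteq> verts H" "is_iso h H G"
  shows "last_triangle G (h ` T)"
proof -
  obtain E t C' f where p: "ladder E" "t \<in> verts E" "replace_by_triangle E t C'" "is_iso f C' H"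
      "\<forall>x\<in>verts C'. x \<in> verts E \<longleftrightarrow> f x \<notin> T"
    using assms(1) unfolding last_triangle_def by blast
  have "x \<in> verts E \<longleftrightarrow> (h \<circ> f) x \<notin> h ` T" if "x \<in> verts C'" for x
    using p(5) that is_iso_in[OF p(4) that] assms(2) is_iso_inj_on[OF assms(3)]
    by (simp add: inj_on_image_mem_iff)
  then show ?thesis unfolding last_triangle_def using p(1-3) is_iso_comp[OF p(4) assms(3)] by blast
qed

lemma last_triangle_replace:
  assumes last: "last_triangle H T" and T: "T \<subseteq> verts H"
    and w: "w \<in> \<Union>(triangles H)" "w \<notin> T" and r: "replace_by_triangle H w G"
  shows "last_triangle G T"
proof -
  obtain E t H' f where p: "ladder E" "t \<in> verts E" "replace_by_triangle E t H'" "is_iso f H' H"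
      "\<forall>x\<in>verts H'. x \<in> verts E \<longleftrightarrow> f x \<notin> T"
    using last unfolding last_triangle_def by blast
  have cH: "cubic H" "cubic H'"
    using replace_by_triangle_cubic r p(3) by blast+
  have wH: "w \<in> verts H" using replace_by_triangle_verts(1)[OF r] .
  obtain w0 where w0: "w0 \<in> verts H'" "f w0 = w" using is_iso_surj[OF p(4) wH] by blast
  have w0E: "w0 \<in> verts E" using p(5) w0 w(2) by blast
  have w0t: "w0 \<noteq> t" using w0(1) replace_by_triangle_verts(2)[OF p(3)] by blast
  obtain C'' g where pl: "replace_by_triangle H' w0 C''" "is_iso g C'' G"
      "\<forall>z\<in>verts H' - {w0}. g z = f z" "\<forall>z\<in>verts C'' - verts H'. g z \<in> verts G - verts H"
    by (rule replace_by_triangle_iso[OF p(4) cH(2) w0(1) r[folded w0(2)]])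
  obtain E1 C3 k where cm: "replace_by_triangle E w0 E1" "replace_by_triangle E1 t C3" "is_iso k C3 C''"
      "\<forall>z\<in>verts C3. z \<in> verts H' \<longrightarrow> k z = z"
      "\<forall>z\<in>verts C3. z \<in> verts E1 - verts E \<longrightarrow> k z \<in> verts C'' - verts H'"
      "\<forall>z\<in>verts C3. z \<notin> verts E1 \<longrightarrow> z \<in> verts H' - verts E"
    by (rule replace_by_triangle_commute[OF p(3) pl(1) w0E w0t])
  obtain S where S: "S \<in> triangles H" "w \<in> S" using w(1) by blast
  obtain S0 where "S0 \<in> triangles E" "w0 \<in> S0"
    by (rule replace_by_triangle_iso_triangle[OF p(3) cubic_wf_graph[OF cH(1)] p(4) S(1) w0E w0t])
      (use w0(2) S(2) in simp)
  then have "ladder E1" using ladder.step[OF p(1) _ cm(1)] by blast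
  moreover have "t \<in> verts E1" using replace_by_triangle_verts(3)[OF cm(1)] p(2) w0t by blast
  moreover have "x \<in> verts E1 \<longleftrightarrow> (g \<circ> k) x \<notin> T" if x: "x \<in> verts C3" for x
  proof -
    have "x \<noteq> t" using x replace_by_triangle_verts(2)[OF cm(2)] by blast
    consider "x \<in> verts E1" "x \<in> verts E" | "x \<in> verts E1" "x \<notin> verts E" | "x \<notin> verts E1" by blast
    then show ?thesis
    proof cases
      case 1
      then have "x \<noteq> w0" using replace_by_triangle_verts(2)[OF cm(1)] by blast
      then have "x \<in> verts H'" using replace_by_triangle_verts(3)[OF p(3)] 1(2) \<open>x \<noteq> t\<close> by blast
      then show ?thesis using 1 cm(4) pl(3) p(5) x \<open>x \<noteq> w0\<close> by simp
    next
      case 2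
      then have "g (k x) \<in> verts G - verts H" using cm(5) pl(4) x by blast
      then show ?thesis using 2(1) T by auto
    next
      case 3
      then have xH: "x \<in> verts H'" "x \<notin> verts E" using cm(6) x by blast+
      then have "x \<noteq> w0" using w0E by blast
      then show ?thesis using 3 xH cm(4) pl(3) p(5) x by simp
    qed
  qed
  ultimately show ?thesis
    unfolding last_triangle_def using cm(2) is_iso_comp[OF cm(3) pl(2)] by blast
qed

lemma ladder_last_triangle:
  assumes "ladder C" "card (verts C) \<ge> 6" "T \<in> triangles C"
  shows "last_triangle C T"
  using assms
proof (induction arbitrary: T rule: ladder.induct)
  case (K4 G)
  then show ?case unfolding is_K4_def by simp
next
  case (step H w G)
  obtain x1 x2 x3 u1 u2 u3 where r: "triangle_replacement H w G x1 x2 x3 u1 u2 u3"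
    by (rule replace_by_triangleE[OF step.hyps(3)])
  interpret r: triangle_replacement H w G x1 x2 x3 u1 u2 u3 by (fact r)
  consider "T = {u1, u2, u3}" | "T \<in> triangles H" "w \<notin> T" using step.prems(2) r.triangles_H by blast
  then show ?case
  proof cases
    case 1
    then show ?thesis using last_triangle_new[OF step.hyps(1) r] by simp
  next
    case 2
    show ?thesis
    proof (cases "is_K4 H")
      case True
      then show ?thesis using last_triangle_K4[OF True r] is_K4_triangle_avoiding[OF True 2(1) r.v_in_G 2(2)]
        by simp
    next
      case False
      then have "card (verts H) \<ge> 6" using ladder_imp_shape[OF step.hyps(1)] unfolding ladder_shape_def by simp
      then show ?thesis
        using last_triangle_replace[OF step.IH[OF _ 2(1)] _ step.hyps(2) 2(2) step.hyps(3)]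
          triangles_subset_verts[OF 2(1)] by blast
    qed
  qed
next
  case (iso H G)
  have cH: "cubic H" using ladder_imp_shape[OF iso.hyps(1)] unfolding ladder_shape_def by simp
  obtain h where h: "is_iso h H G" and cG: "cubic G" using graph_iso_cubic[OF cH iso.hyps(2)] by blast
  have wf: "wf_graph H" "wf_graph G" using cH cG cubic_wf_graph by blast+
  obtain T0 where T0: "T0 \<in> triangles H" "T = h ` T0"
    using iso.prems(2) is_iso_triangles[OF wf h] by blast
  have "card (verts H) \<ge> 6" using iso.prems(1) is_iso_card[OF h] by simp
  then show ?case using last_triangle_iso[OF iso.IH[OF _ T0(1)] triangles_subset_verts[OF T0(1)] h] T0(2)
    by simp
qed

section \<open>The tricorn family\<close>

definition tricorn_family :: "graph \<Rightarrow> bool" where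
  "tricorn_family G \<longleftrightarrow> (\<exists>T X. is_tricorn T \<and> (X = T \<or> descendant T X) \<and> graph_iso X G)"

lemma is_tricorn_cubic: "is_tricorn T \<Longrightarrow> cubic T"
  unfolding is_tricorn_def using replace_by_triangle_cubic(2) by blast

lemma descendant_cubic: "descendant T H \<Longrightarrow> cubic H"
  by (induction rule: descendant.induct) (use replace_by_triangle_cubic(2) in blast)+

lemma tricorn_familyE:
  assumes "tricorn_family G"
  obtains T X h where "is_tricorn T" "X = T \<or> descendant T X" "cubic X" "is_iso h X G" "cubic G"
proof -
  obtain T X where X: "is_tricorn T" "X = T \<or> descendant T X" "graph_iso X G"
    using assms unfolding tricorn_family_def by blast
  have "cubic X" using X(1,2) is_tricorn_cubic descendant_cubic by blast
  then show ?thesis using that X graph_iso_cubic[OF _ X(3)] by blast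
qed

lemma tricorn_family_iso:
  assumes "tricorn_family G" "cubic G'" "is_iso f G G'"
  shows "tricorn_family G'"
proof -
  obtain T X h where X: "is_tricorn T" "X = T \<or> descendant T X" "cubic X" "is_iso h X G"
    by (rule tricorn_familyE[OF assms(1)])
  have "graph_iso X G'"
    using is_iso_imp_graph_iso[OF cubic_wf_graph[OF X(3)] cubic_wf_graph[OF assms(2)]
        is_iso_comp[OF X(4) assms(3)]] .
  then show ?thesis using X(1,2) unfolding tricorn_family_def by blast
qed

lemma tricorn_family_graph_iso: "tricorn_family H \<Longrightarrow> graph_iso H G \<Longrightarrow> tricorn_family G"
  by (metis graph_iso_cubic tricorn_familyE tricorn_family_iso)

lemma tricorn_family_replace:
  assumes "tricorn_family G" "replace_by_triangle G w G2"
  shows "tricorn_family G2"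
proof -
  obtain T X h where X: "is_tricorn T" "X = T \<or> descendant T X" "cubic X" "is_iso h X G"
    by (rule tricorn_familyE[OF assms(1)])
  obtain w0 where w0: "w0 \<in> verts X" "h w0 = w"
    using is_iso_surj[OF X(4) replace_by_triangle_verts(1)[OF assms(2)]] by blast
  obtain X2 g where p: "replace_by_triangle X w0 X2" "is_iso g X2 G2"
    by (rule replace_by_triangle_iso[OF X(4,3) w0(1) assms(2)[folded w0(2)]])
  have "descendant T X2" using X(2) p(1) w0(1) descendant.one descendant.more by blast
  moreover have "graph_iso X2 G2"
    using replace_by_triangle_cubic(2) p(1) assms(2) is_iso_imp_graph_iso[OF _ _ p(2)] cubic_wf_graph
    by blast
  ultimately show ?thesis using X(1) unfolding tricorn_family_def by blast
qed

lemma is_tricorn_tricorn_family: "is_tricorn T \<Longrightarrow> tricorn_family T"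
  unfolding tricorn_family_def
  using is_iso_imp_graph_iso[OF _ _ is_iso_id] is_tricorn_cubic cubic_wf_graph by blast

section \<open>Replacements outside the triangles of a ladder\<close>

lemma tricorn_family_replace_commute:
  assumes r: "replace_by_triangle E t C'" "replace_by_triangle C' w G'" and w: "w \<in> verts E" "w \<noteq> t"
  obtains G0 where "replace_by_triangle E w G0" "tricorn_family G0 \<longrightarrow> tricorn_family G'"
proof -
  obtain E1 C3 k where c: "replace_by_triangle E w E1" "replace_by_triangle E1 t C3" "is_iso k C3 G'"
    by (rule replace_by_triangle_commute[OF r w])
  have "tricorn_family G'" if "tricorn_family E1"
    using tricorn_family_iso[OF tricorn_family_replace[OF that c(2)] replace_by_triangle_cubic(2)[OF r(2)] c(3)] .
  then show ?thesis using that c(1) by blast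
qed

text \<open>\<open>G\<close> is in the tricorn family, or will be once this is known for some replacement outside the
  triangles of a ladder with fewer than \<open>n\<close> vertices.\<close>

definition tricorn_reducible :: "nat \<Rightarrow> graph \<Rightarrow> bool" where
  "tricorn_reducible n G \<longleftrightarrow> tricorn_family G \<or> (\<exists>C w G0. ladder C \<and> card (verts C) < n \<and>
     replace_by_triangle C w G0 \<and> w \<notin> \<Union>(triangles C) \<and> (tricorn_family G0 \<longrightarrow> tricorn_family G))"

lemma tricorn_reducible_iso:
  assumes "tricorn_reducible n G" "cubic G'" "is_iso f G G'"
  shows "tricorn_reducible n G'"
  using assms(1) tricorn_family_iso[OF _ assms(2,3)] unfolding tricorn_reducible_def by blast

lemma tricorn_reducible_mono: "tricorn_reducible n G \<Longrightarrow> n \<le> m \<Longrightarrow> tricorn_reducible m G"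
  unfolding tricorn_reducible_def using order_less_le_trans by blast

lemma tricorn_reducible_triangle:
  assumes F: "ladder F" and S0: "S0 \<in> triangles F" "t0 \<in> S0" "w0 \<in> S0" "t0 \<noteq> w0"
    and a: "a \<in> verts F" "a \<notin> S0"
    and r: "replace_by_triangle F a E''" "replace_by_triangle E'' t0 C2" "replace_by_triangle C2 w0 G2"
  shows "tricorn_reducible (card (verts F) + 3) G2"
proof (cases "is_K4 F")
  case True
  have "t0 \<in> verts F" "w0 \<in> verts F" "distinct [a, t0, w0]"
    using triangles_subset_verts[OF S0(1)] S0(2-4) a(2) by auto
  then have "is_tricorn G2" unfolding is_tricorn_def using True a(1) r by blast
  then show ?thesis using is_tricorn_tricorn_family unfolding tricorn_reducible_def by blast
next
  case False
  have disj: "\<forall>S\<in>triangles F. \<forall>T\<in>triangles F. S \<noteq> T \<longrightarrow> S \<inter> T = {}"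
    using ladder_imp_shape[OF F] False unfolding ladder_shape_def two_disjoint_triangles_def by blast
  have tw: "t0 \<in> verts F" "w0 \<in> verts F" "t0 \<noteq> a" "w0 \<noteq> a"
    using triangles_subset_verts[OF S0(1)] S0(2,3) a(2) by auto
  obtain F1 C3 k where c1: "replace_by_triangle F t0 F1" "replace_by_triangle F1 a C3" "is_iso k C3 C2"
      "\<forall>z\<in>verts C3. z \<in> verts E'' \<longrightarrow> k z = z"
    by (rule replace_by_triangle_commute[OF r(1,2) tw(1,3)])
  obtain q1 q2 q3 b1 b2 b3 where rF1: "triangle_replacement F t0 F1 q1 q2 q3 b1 b2 b3"
    by (rule replace_by_triangleE[OF c1(1)])
  have w0F1: "w0 \<in> verts F1" using replace_by_triangle_verts(3)[OF c1(1)] tw S0(4) by blast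
  have w0C3: "w0 \<in> verts C3" using replace_by_triangle_verts(3)[OF c1(2)] w0F1 tw(4) by blast
  have "k w0 = w0" using c1(4) w0C3 replace_by_triangle_verts(3)[OF r(1)] tw(2,4) by blast
  then obtain G4 k2 where p: "replace_by_triangle C3 w0 G4" "is_iso k2 G4 G2"
    using replace_by_triangle_iso[OF c1(3) replace_by_triangle_cubic(2)[OF c1(2)] w0C3] r(3) by metis
  obtain G0 where G0: "replace_by_triangle F1 w0 G0" "tricorn_family G0 \<longrightarrow> tricorn_family G4"
    by (rule tricorn_family_replace_commute[OF c1(2) p(1) w0F1 tw(4)])
  have "ladder F1" using ladder.step[OF F _ c1(1)] S0(1,2) by blast
  moreover have "w0 \<notin> \<Union>(triangles F1)"
  proof
    assume "w0 \<in> \<Union>(triangles F1)"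
    then obtain R where R: "R \<in> triangles F1" "w0 \<in> R" by blast
    have "w0 \<notin> {b1, b2, b3}" using tw(2) triangle_replacement.new_notin_G[OF rF1] by blast
    then have "R \<in> triangles F" "t0 \<notin> R" using R triangle_replacement.triangles_H[OF rF1] by blast+
    then show False using disj S0 R(2) by blast
  qed
  moreover have "card (verts F1) < card (verts F) + 3"
    using triangle_replacement.card_verts_H[OF rF1] by simp
  moreover have "tricorn_family G0 \<longrightarrow> tricorn_family G2"
    using G0(2) tricorn_family_iso p(2) replace_by_triangle_cubic(2)[OF r(3)] by blast
  ultimately show ?thesis using G0(1) unfolding tricorn_reducible_def by blast
qed

lemma tricorn_reducible_peeled:
  assumes E: "ladder E" and r: "replace_by_triangle E t C'" "replace_by_triangle C' w G'"
    and w: "w \<in> verts E" "w \<noteq> t" "w \<notin> \<Union>(triangles C')" and S: "S \<in> triangles E" "w \<in> S"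
  shows "tricorn_reducible (card (verts C')) G'"
proof -
  obtain y1 y2 y3 t1 t2 t3 where "triangle_replacement E t C' y1 y2 y3 t1 t2 t3"
    by (rule replace_by_triangleE[OF r(1)])
  then interpret r: triangle_replacement E t C' y1 y2 y3 t1 t2 t3 .
  have tS: "t \<in> S" using S w(3) r.triangles_H by blast
  have "\<not> is_K4 E" using is_K4_triangles[OF _ r.v_in_G] r.triangles_H w by blast
  then have "card (verts E) \<ge> 6" "two_disjoint_triangles E"
    using ladder_imp_shape[OF E] unfolding ladder_shape_def by blast+
  then obtain A where A: "triangles E = {S, A}" "S \<inter> A = {}" "S \<noteq> A"
    using two_disjoint_trianglesE[OF _ S(1)] by blast
  then obtain F a E'' g where p: "ladder F" "a \<in> verts F" "replace_by_triangle F a E''" "is_iso g E'' E"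
      "\<forall>x\<in>verts E''. x \<in> verts F \<longleftrightarrow> g x \<notin> A"
    using ladder_last_triangle[OF E \<open>card (verts E) \<ge> 6\<close>, of A] unfolding last_triangle_def by blast
  obtain t0 where t0: "t0 \<in> verts E''" "g t0 = t" using is_iso_surj[OF p(4) r.v_in_G] by blast
  obtain w0 where w0: "w0 \<in> verts E''" "g w0 = w" using is_iso_surj[OF p(4) w(1)] by blast
  have t0F: "t0 \<in> verts F" and w0F: "w0 \<in> verts F" using p(5) t0 w0 tS S(2) A(2) by blast+
  have tw: "t0 \<noteq> w0" using t0 w0 w(2) by blast
  obtain C2 h where p2: "replace_by_triangle E'' t0 C2" "is_iso h C2 C'" "\<forall>z\<in>verts E'' - {t0}. h z = g z"
    by (rule replace_by_triangle_iso[OF p(4) replace_by_triangle_cubic(2)[OF p(3)] t0(1) r(1)[folded t0(2)]])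
  have "h w0 = w" using p2(3) w0 tw by simp
  have w0C2: "w0 \<in> verts C2" using replace_by_triangle_verts(3)[OF p2(1)] w0(1) tw by blast
  obtain G2 h2 where p3: "replace_by_triangle C2 w0 G2" "is_iso h2 G2 G'"
    "\<forall>z\<in>verts C2 - {w0}. h2 z = h z" "\<forall>z\<in>verts G2 - verts C2. h2 z \<in> verts G' - verts C'"
    by (rule replace_by_triangle_iso[OF p2(2) replace_by_triangle_cubic(2)[OF p2(1)] w0C2
          r(2)[folded \<open>h w0 = w\<close>]])
  have "t0 \<noteq> a" using t0(1) replace_by_triangle_verts(2)[OF p(3)] by blast
  then obtain S0 where S0: "S0 \<in> triangles F" "t0 \<in> S0" "a \<notin> S0" "S = g ` S0"
    by (rule replace_by_triangle_iso_triangle[OF p(3) r.wf_G p(4) S(1) t0F]) (use t0(2) tS in simp)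
  have "S0 \<subseteq> verts E''"
    using triangles_subset_verts[OF S0(1)] S0(3) replace_by_triangle_verts(3)[OF p(3)] by blast
  then have "w0 \<in> S0"
    using inj_on_image_mem_iff[OF is_iso_inj_on[OF p(4)] w0(1)] S(2) S0(4) w0(2) by simp
  from tricorn_reducible_triangle[OF p(1) S0(1,2) this tw p(2) S0(3) p(3) p2(1) p3(1)]
  have "tricorn_reducible (card (verts F) + 3) G'"
    using tricorn_reducible_iso p3(2) replace_by_triangle_cubic(2)[OF r(2)] by blast
  moreover have "card (verts F) + 3 \<le> card (verts C')"
    using p(3) r(1) is_iso_card[OF p(4)]
    by (auto elim!: replace_by_triangleE simp: triangle_replacement.card_verts_H)
  ultimately show ?thesis by (rule tricorn_reducible_mono)
qed

lemma ladder_replace_outside_reduces: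
  assumes C: "ladder C" and r: "replace_by_triangle C w G" and w: "w \<notin> \<Union>(triangles C)"
  shows "tricorn_reducible (card (verts C)) G"
proof -
  have wC: "w \<in> verts C" using replace_by_triangle_verts(1)[OF r] .
  have "\<not> is_K4 C" using is_K4_vertex_in_triangle wC w by blast
  then have "card (verts C) \<ge> 6" "two_disjoint_triangles C"
    using ladder_imp_shape[OF C] unfolding ladder_shape_def by blast+
  moreover obtain T where "T \<in> triangles C"
    using \<open>two_disjoint_triangles C\<close> unfolding two_disjoint_triangles_def by fastforce
  ultimately obtain E t C' f where p: "ladder E" "replace_by_triangle E t C'" "is_iso f C' C"
    using ladder_last_triangle[OF C] unfolding last_triangle_def by blast
  obtain y1 y2 y3 t1 t2 t3 where "triangle_replacement E t C' y1 y2 y3 t1 t2 t3"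
    by (rule replace_by_triangleE[OF p(2)])
  then interpret p: triangle_replacement E t C' y1 y2 y3 t1 t2 t3 .
  have cC: "cubic C" using replace_by_triangle_cubic(1)[OF r] .
  obtain w' where w': "w' \<in> verts C'" "f w' = w" using is_iso_surj[OF p(3) wC] by blast
  obtain G' g where pg: "replace_by_triangle C' w' G'" "is_iso g G' G"
    by (rule replace_by_triangle_iso[OF p(3) p.cubic_H w'(1) r[folded w'(2)]])
  have w'C': "w' \<notin> \<Union>(triangles C')"
    using is_iso_in_triangles[OF p.wf_H cubic_wf_graph[OF cC] p(3) w'(1)] w w'(2) by simp
  then have "w' \<notin> {t1, t2, t3}" using p.triangles_H by blast
  then have w'E: "w' \<in> verts E" "w' \<noteq> t" using w'(1) unfolding p.mem_verts_H by blast+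
  have "tricorn_reducible (card (verts C')) G'"
  proof (cases "w' \<in> \<Union>(triangles E)")
    case True
    then obtain S where "S \<in> triangles E" "w' \<in> S" by blast
    then show ?thesis using tricorn_reducible_peeled[OF p(1,2) pg(1) w'E w'C'] by blast
  next
    case False
    obtain G0 where "replace_by_triangle E w' G0" "tricorn_family G0 \<longrightarrow> tricorn_family G'"
      by (rule tricorn_family_replace_commute[OF p(2) pg(1) w'E])
    moreover have "card (verts E) < card (verts C')" using p.card_verts_H by simp
    ultimately show ?thesis using p(1) False unfolding tricorn_reducible_def by blast
  qed
  then show ?thesis
    using tricorn_reducible_iso pg(2) replace_by_triangle_cubic(2)[OF r] is_iso_card[OF p(3)] by metis
qed

lemma ladder_replace_outside_triangles:
  "ladder C \<Longrightarrow> replace_by_triangle C w G \<Longrightarrow> w \<notin> \<Union>(triangles C) \<Longrightarrow> tricorn_family G"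
proof (induction "card (verts C)" arbitrary: C w G rule: less_induct)
  case less
  then show ?case
    using ladder_replace_outside_reduces[OF less.prems] unfolding tricorn_reducible_def by blast
qed

lemma klee_ladder_or_tricorn_family: "klee G \<Longrightarrow> ladder G \<or> tricorn_family G"
proof (induction rule: klee.induct)
  case (K4 G)
  then show ?case using ladder.K4 by blast
next
  case (step H w G)
  show ?case
  proof (cases "ladder H")
    case True
    then show ?thesis
      using ladder.step[OF True _ step.hyps(3)] ladder_replace_outside_triangles[OF True step.hyps(3)] by blast
  next
    case False
    then show ?thesis using step.IH tricorn_family_replace[OF _ step.hyps(3)] by blast
  qed
next
  case (iso H G)
  then show ?case using ladder.iso tricorn_family_graph_iso by blast
qed

theorem mainTheorem12:
  assumes "klee G"
    and "card (verts G) \<ge> 10"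
    and "card (triangles G) \<ge> 3"
  shows "\<exists>T. is_tricorn T \<and>
           (graph_iso T G \<or> (\<exists>H. descendant T H \<and> graph_iso H G))"
proof -
  have "\<not> ladder_shape G"
    using assms(2,3) unfolding ladder_shape_def two_disjoint_triangles_def is_K4_def by auto
  then have "\<not> ladder G" using ladder_imp_shape by blast
  then have "tricorn_family G" using klee_ladder_or_tricorn_family[OF assms(1)] by blast
  then show ?thesis unfolding tricorn_family_def by blast
qed

end
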